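(* There exist quantum circuits of depth $O(1)$ (independent of $n,t$) implementing exactly the quantum operation $\mathrm{TH}_n^t$, with: (i) size $O(tn\log n)$ for any $1\le t\le\lceil n/2\rceil$; (ii) size $O((n-t+1)n\log n)$ for any $\lceil n/2\rceil\le t\le n$.
   Context: Quantum circuits are built from elementary gates: arbitrary one-qubit gates, CNOT gates, and unbounded fan-out gates. An unbounded fan-out gate on $k+1$ qubits ($k\ge1$) maps $|y\rangle\bigotimes_{j=0}^{k-1}|x_j\rangle \mapsto |y\rangle\bigotimes_{j=0}^{k-1}|x_j\oplus y\rangle$. Circuits may use ancillary qubits initialized to $|0\rangle$. The size of a circuit is the total over its gates of the number of qubits each gate acts on; the depth is the number of layers. For $1\le t\le n$ and $x\in\{0,1\}^n$ with Hamming weight $|x|$, $\mathrm{TH}_n^t(x)=1$ if $|x|\ge t$ and $0$ otherwise; the quantum operation $\mathrm{TH}_n^t$ maps $\bigl(\bigotimes_j|x_j\rangle\bigr)|z\rangle\mapsto\bigl(\bigotimes_j|x_j\rangle\bigr)|z\oplus\mathrm{TH}_n^t(x)\rangle$. Logarithms are base 2. *)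

theory Defs
  imports Complex_Main
begin

type_synonym basis = "nat \<Rightarrow> bool"
type_synonym state = "basis \<Rightarrow> complex"

text \<open>Elementary gates: an arbitrary one-qubit gate (given by a 2x2 matrix,
  U out in), a CNOT (control, target), and an unbounded fan-out gate
  (control y, targets xs).\<close>

datatype gate =
    G1 nat "bool \<Rightarrow> bool \<Rightarrow> complex"
  | CNOT nat nat
  | FanOut nat "nat list"

definition unitary2 :: "(bool \<Rightarrow> bool \<Rightarrow> complex) \<Rightarrow> bool" where
  "unitary2 U \<longleftrightarrow>
     (\<forall>a a'. (\<Sum>b\<in>UNIV. cnj (U b a) * U b a') = (if a = a' then 1 else 0))"

fun qubits :: "gate \<Rightarrow> nat set" where
  "qubits (G1 q U) = {q}"
| "qubits (CNOT c t) = {c, t}"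
| "qubits (FanOut y ts) = insert y (set ts)"

fun wf_gate :: "gate \<Rightarrow> bool" where
  "wf_gate (G1 q U) = unitary2 U"
| "wf_gate (CNOT c t) = (c \<noteq> t)"
| "wf_gate (FanOut y ts) = (ts \<noteq> [] \<and> distinct ts \<and> y \<notin> set ts)"

fun gate_size :: "gate \<Rightarrow> nat" where
  "gate_size (G1 q U) = 1"
| "gate_size (CNOT c t) = 2"
| "gate_size (FanOut y ts) = length ts + 1"

fun apply_gate :: "gate \<Rightarrow> state \<Rightarrow> state" where
  "apply_gate (G1 q U) \<psi> = (\<lambda>x. \<Sum>b\<in>UNIV. U (x q) b * \<psi> (x(q := b)))"
| "apply_gate (CNOT c t) \<psi> = (\<lambda>x. \<psi> (x(t := (x t \<noteq> x c))))"
| "apply_gate (FanOut y ts) \<psi> =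
     (\<lambda>x. \<psi> (\<lambda>i. if i \<in> set ts then x i \<noteq> x y else x i))"

type_synonym layer = "gate list"
type_synonym circuit = "layer list"

definition wf_layer :: "layer \<Rightarrow> bool" where
  "wf_layer L \<longleftrightarrow> (\<forall>g\<in>set L. wf_gate g) \<and>
     (\<forall>i j. i < length L \<and> j < length L \<and> i \<noteq> j \<longrightarrow>
            qubits (L ! i) \<inter> qubits (L ! j) = {})"

definition wf_circuit :: "circuit \<Rightarrow> bool" where
  "wf_circuit C \<longleftrightarrow> (\<forall>L\<in>set C. wf_layer L)"

definition apply_layer :: "layer \<Rightarrow> state \<Rightarrow> state" where
  "apply_layer L \<psi> = fold apply_gate L \<psi>"

definition run :: "circuit \<Rightarrow> state \<Rightarrow> state" where
  "run C \<psi> = fold apply_layer C \<psi>"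

definition depth :: "circuit \<Rightarrow> nat" where
  "depth C = length C"

definition csize :: "circuit \<Rightarrow> nat" where
  "csize C = (\<Sum>L\<leftarrow>C. \<Sum>g\<leftarrow>L. gate_size g)"

definition ket :: "basis \<Rightarrow> state" where
  "ket x = (\<lambda>y. if y = x then 1 else 0)"

definition TH :: "nat \<Rightarrow> nat \<Rightarrow> basis \<Rightarrow> bool" where
  "TH n t x \<longleftrightarrow> t \<le> card {i. i < n \<and> x i}"

text \<open>C implements TH_n^t exactly: inputs on qubits 0..n-1, output on qubit n,
  all other qubits are ancillas initialised to 0 and returned to 0.
  (By linearity, correctness on basis states gives correctness on all states.)\<close>
definition implements_TH :: "nat \<Rightarrow> nat \<Rightarrow> circuit \<Rightarrow> bool" where
  "implements_TH n t C \<longleftrightarrow> wf_circuit C \<and>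
     (\<forall>x. (\<forall>i>n. \<not> x i) \<longrightarrow>
        run C (ket x) = ket (x(n := (x n \<noteq> TH n t x))))"

end

theory Submission
  imports Defs "HOL-Library.Nat_Bijection"
begin

text \<open>
  The construction rests on one constant-depth primitive: for a list of terms \<open>(S, a)\<close> it
  multiplies each basis state \<open>x\<close> by \<open>exp(i \<Sum> a [|x\<^sub>S| odd])\<close>. Fan-outs copy the qubits of
  every term into fresh ancillas; a fan-out conjugated by Hadamards collects the parity of the
  copies in a root ancilla, where a phase gate applies the angle; then everything is uncomputed.

  For each candidate weight \<open>k \<in> K\<close> a register \<open>y\<^sub>k\<close> of \<open>m \<approx> log n\<close> qubits is put into uniform
  superposition and qubit \<open>l\<close> gets the phase \<open>exp(2\<pi>i 2\<^sup>l (|x| - k) / 2\<^sup>m)\<close>, a sum of parity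
  terms. After the inverse Hadamards, \<open>y\<^sub>k\<close> has a nonzero amplitude at \<open>0\<close> only if \<open>|x| = k\<close>:
  for \<open>0 < ||x| - k| < 2\<^sup>m\<close> one of the phases is \<open>-1\<close>. The primitive, applied to the Walsh
  expansion of \<open>e\<^sub>k \<and> (y\<^sub>k = 0)\<close> and conjugated by Hadamards on the flags \<open>e\<^sub>k\<close>, flips \<open>e\<^sub>k\<close>
  exactly when \<open>|x| = k\<close>, and the registers \<open>y\<^sub>k\<close> are uncomputed. At most one flag is set; their
  parity is fanned into the output, and repeating the flag circuit clears them. Taking
  \<open>K = {0..<t}\<close> and negating, or \<open>K = {t..n}\<close>, gives \<open>TH\<^sub>n\<^sup>t\<close> with \<open>O(|K| n log n)\<close> gates.
\<close>

section \<open>Hadamard transforms\<close>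

definition inv_sqrt2 :: complex where
  "inv_sqrt2 = complex_of_real (1 / sqrt 2)"

definition hadamard :: "bool \<Rightarrow> bool \<Rightarrow> complex" where
  "hadamard a b = (if a \<and> b then - inv_sqrt2 else inv_sqrt2)"

definition phase_shift :: "real \<Rightarrow> bool \<Rightarrow> bool \<Rightarrow> complex" where
  "phase_shift \<alpha> a b = (if a = b then (if a then cis \<alpha> else 1) else 0)"

definition pauli_x :: "bool \<Rightarrow> bool \<Rightarrow> complex" where
  "pauli_x a b = (if a \<noteq> b then 1 else 0)"

lemma unitary2_hadamard: "unitary2 hadamard"
  unfolding unitary2_def hadamard_def
  by (auto simp: UNIV_bool inv_sqrt2_def simp flip: of_real_mult)

lemma unitary2_phase_shift: "unitary2 (phase_shift \<alpha>)"
  unfolding unitary2_def phase_shift_def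
  by (auto simp: UNIV_bool cis_cnj cis_mult)

lemma unitary2_pauli_x: "unitary2 pauli_x"
  unfolding unitary2_def pauli_x_def by (auto simp: UNIV_bool)

lemma apply_gate_G1:
  "apply_gate (G1 q U) \<psi> x = U (x q) False * \<psi> (x(q := False)) + U (x q) True * \<psi> (x(q := True))"
  by (simp add: UNIV_bool add.commute)

lemma apply_gate_phase_shift:
  "apply_gate (G1 q (phase_shift \<alpha>)) \<psi> = (\<lambda>w. (if w q then cis \<alpha> else 1) * \<psi> w)"
  by (rule ext) (simp add: apply_gate_G1 phase_shift_def fun_upd_idem del: apply_gate.simps)

lemma apply_gate_pauli_x: "apply_gate (G1 q pauli_x) \<psi> = (\<lambda>w. \<psi> (w(q := \<not> w q)))"
  by (rule ext) (simp add: apply_gate_G1 pauli_x_def del: apply_gate.simps)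

lemma apply_layer_Nil: "apply_layer [] \<psi> = \<psi>"
  by (simp add: apply_layer_def)

lemma apply_layer_Cons: "apply_layer (g # L) \<psi> = apply_layer L (apply_gate g \<psi>)"
  by (simp add: apply_layer_def)

lemma run_Nil: "run [] \<psi> = \<psi>"
  by (simp add: run_def)

lemma run_Cons: "run (L # C) \<psi> = run C (apply_layer L \<psi>)"
  by (simp add: run_def)

lemma run_append: "run (C1 @ C2) \<psi> = run C2 (run C1 \<psi>)"
  by (simp add: run_def)

lemma ket_comp_involution:
  assumes "\<And>w. f (f w) = w"
  shows "(\<lambda>w. ket v (f w)) = ket (f v)"
proof
  fix w
  have "f w = v \<longleftrightarrow> w = f v" by (metis assms)
  then show "ket v (f w) = ket (f v) w" by (simp add: ket_def)
qed

lemma run_pauli_x: "run [[G1 q pauli_x]] (ket v) = ket (v(q := \<not> v q))"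
proof -
  have "run [[G1 q pauli_x]] (ket v) = (\<lambda>w. ket v (w(q := \<not> w q)))"
    by (simp add: run_def apply_layer_def apply_gate_pauli_x del: apply_gate.simps)
  also have "\<dots> = ket (v(q := \<not> v q))" by (rule ket_comp_involution) simp
  finally show ?thesis .
qed

definition assign :: "nat set \<Rightarrow> nat set \<Rightarrow> basis \<Rightarrow> basis" where
  "assign Q B w = (\<lambda>j. if j \<in> Q then j \<in> B else w j)"

definition walsh_sign :: "basis \<Rightarrow> nat set \<Rightarrow> complex" where
  "walsh_sign w B = (\<Prod>a\<in>B. if w a then -1 else 1)"

definition hadamard_on :: "nat set \<Rightarrow> state \<Rightarrow> state" where
  "hadamard_on Q \<psi> =
     (\<lambda>w. inv_sqrt2 ^ card Q * (\<Sum>B\<in>Pow Q. walsh_sign w B * \<psi> (assign Q B w)))"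

lemma assign_assign [simp]: "assign Q B' (assign Q B w) = assign Q B' w"
  by (simp add: assign_def fun_eq_iff)

lemma walsh_sign_assign:
  assumes "B' \<subseteq> Q"
  shows "walsh_sign (assign Q B w) B' = (\<Prod>a\<in>B'. if a \<in> B then -1 else 1)"
  unfolding walsh_sign_def assign_def using assms by (intro prod.cong) auto

lemma prod_sign_swap:
  assumes "finite B" "finite B'"
  shows "(\<Prod>a\<in>B'. if a \<in> B then (-1::complex) else 1) = (\<Prod>a\<in>B. if a \<in> B' then -1 else 1)"
proof -
  have "(\<Prod>a\<in>B'. if a \<in> B then (-1::complex) else 1) = (\<Prod>a\<in>{a\<in>B'. a \<in> B}. -1)"
    using assms(2) by (rule prod.inter_filter[symmetric])
  also have "{a\<in>B'. a \<in> B} = {a\<in>B. a \<in> B'}" by auto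
  also have "(\<Prod>a\<in>{a\<in>B. a \<in> B'}. (-1::complex)) = (\<Prod>a\<in>B. if a \<in> B' then -1 else 1)"
    using assms(1) by (rule prod.inter_filter)
  finally show ?thesis .
qed

lemma sum_Pow_insert:
  assumes "finite Q" "q \<notin> Q"
  shows "(\<Sum>B\<in>Pow (insert q Q). f B) = (\<Sum>B\<in>Pow Q. f B) + (\<Sum>B\<in>Pow Q. f (insert q B))"
proof -
  have "(\<Sum>B\<in>Pow (insert q Q). f B) = (\<Sum>B\<in>Pow Q \<union> insert q ` Pow Q. f B)"
    by (simp add: Pow_insert)
  also have "\<dots> = (\<Sum>B\<in>Pow Q. f B) + (\<Sum>B\<in>insert q ` Pow Q. f B)"
    by (rule sum.union_disjoint) (use assms in auto)
  also have "(\<Sum>B\<in>insert q ` Pow Q. f B) = (\<Sum>B\<in>Pow Q. f (insert q B))"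
    by (subst sum.reindex) (use assms in \<open>auto intro!: inj_onI simp: o_def\<close>)
  finally show ?thesis .
qed

lemma sum_Pow_prod:
  fixes f :: "'a \<Rightarrow> 'c::comm_semiring_1"
  assumes "finite A"
  shows "(\<Sum>B\<in>Pow A. \<Prod>a\<in>B. f a) = (\<Prod>a\<in>A. 1 + f a)"
  using prod_add[OF assms, of f "\<lambda>_. 1"] by (simp add: add.commute)

lemma hadamard_on_empty: "hadamard_on {} \<psi> = \<psi>"
  unfolding hadamard_on_def walsh_sign_def assign_def by simp

lemma hadamard_on_insert:
  assumes "finite Q" "q \<notin> Q"
  shows "hadamard_on Q (apply_gate (G1 q hadamard) \<psi>) = hadamard_on (insert q Q) \<psi>"
proof
  fix w
  have sign: "walsh_sign w (insert q B) = (if w q then -1 else 1) * walsh_sign w B"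
    if "B \<in> Pow Q" for B
    unfolding walsh_sign_def using that assms finite_subset[of B Q] by (subst prod.insert) auto
  have out: "assign (insert q Q) B w = (assign Q B w)(q := False)" if "B \<in> Pow Q" for B
    using that assms unfolding assign_def by (auto simp: fun_eq_iff)
  have ins: "assign (insert q Q) (insert q B) w = (assign Q B w)(q := True)" if "B \<in> Pow Q" for B
    using that assms unfolding assign_def by (auto simp: fun_eq_iff)
  have keep: "assign Q B w q = w q" for B using assms unfolding assign_def by auto
  have "hadamard_on (insert q Q) \<psi> w = inv_sqrt2 ^ card Q * inv_sqrt2 *
      ((\<Sum>B\<in>Pow Q. walsh_sign w B * \<psi> (assign (insert q Q) B w)) +
       (\<Sum>B\<in>Pow Q. walsh_sign w (insert q B) * \<psi> (assign (insert q Q) (insert q B) w)))"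
    unfolding hadamard_on_def using assms by (simp add: sum_Pow_insert mult_ac)
  also have "\<dots> = inv_sqrt2 ^ card Q * inv_sqrt2 *
      ((\<Sum>B\<in>Pow Q. walsh_sign w B * \<psi> ((assign Q B w)(q := False))) +
       (\<Sum>B\<in>Pow Q. (if w q then -1 else 1) * walsh_sign w B * \<psi> ((assign Q B w)(q := True))))"
    by (intro arg_cong2[where f="(+)"] arg_cong2[where f="(*)"] refl sum.cong)
       (simp_all add: sign out ins)
  also have "\<dots> = hadamard_on Q (apply_gate (G1 q hadamard) \<psi>) w"
    unfolding hadamard_on_def apply_gate_G1 keep hadamard_def
    by (cases "w q")
       (simp_all add: sum.distrib sum_distrib_left sum_subtractf sum_negf algebra_simps)
  finally show "hadamard_on Q (apply_gate (G1 q hadamard) \<psi>) w = hadamard_on (insert q Q) \<psi> w"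
    by simp
qed

definition hadamard_layer :: "nat list \<Rightarrow> layer" where
  "hadamard_layer qs = map (\<lambda>q. G1 q hadamard) qs"

lemma apply_hadamard_layer:
  "distinct qs \<Longrightarrow> apply_layer (hadamard_layer qs) \<psi> = hadamard_on (set qs) \<psi>"
proof (induction qs arbitrary: \<psi>)
  case Nil
  then show ?case by (simp add: hadamard_layer_def apply_layer_Nil hadamard_on_empty)
next
  case (Cons q qs)
  then show ?case
    by (simp add: hadamard_layer_def apply_layer_Cons hadamard_on_insert del: apply_gate.simps)
qed

lemma walsh_delta:
  fixes F :: "nat set \<Rightarrow> complex"
  assumes fin: "finite Q" and B0: "B0 \<subseteq> Q"
    and sign: "\<And>B' c. B' \<subseteq> Q \<Longrightarrow> c \<in> Q \<Longrightarrow> h B' c = 1 \<or> h B' c = -1"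
    and uniq: "\<And>B'. B' \<subseteq> Q \<Longrightarrow> (\<forall>c\<in>Q. h B' c = 1) \<longleftrightarrow> B' = B0"
  shows "(\<Sum>B'\<in>Pow Q. (\<Sum>B\<in>Pow Q. \<Prod>c\<in>B. h B' c) * F B') = 2 ^ card Q * F B0"
proof -
  have inner: "(\<Sum>B\<in>Pow Q. \<Prod>c\<in>B. h B' c) = (if B' = B0 then 2 ^ card Q else 0)"
    if B': "B' \<subseteq> Q" for B'
  proof (cases "B' = B0")
    case True
    then have "\<forall>c\<in>Q. h B' c = 1" using uniq[OF B'] by simp
    then show ?thesis using True by (simp add: sum_Pow_prod[OF fin])
  next
    case False
    then obtain c where c: "c \<in> Q" "h B' c \<noteq> 1" using uniq[OF B'] by blast
    then have "1 + h B' c = 0" using sign[OF B' c(1)] by simp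
    then have "(\<Prod>c\<in>Q. 1 + h B' c) = 0" using c fin by (metis prod_zero_iff)
    then show ?thesis using False by (simp add: sum_Pow_prod[OF fin])
  qed
  have "(\<Sum>B'\<in>Pow Q. (\<Sum>B\<in>Pow Q. \<Prod>c\<in>B. h B' c) * F B') =
        (\<Sum>B'\<in>Pow Q. (if B' = B0 then 2 ^ card Q * F B0 else 0))"
    by (rule sum.cong) (auto simp: inner)
  also have "\<dots> = 2 ^ card Q * F B0" using fin B0 by simp
  finally show ?thesis .
qed

lemma inv_sqrt2_pow_sq: "inv_sqrt2 ^ k * inv_sqrt2 ^ k * 2 ^ k = 1"
proof -
  have "inv_sqrt2 * inv_sqrt2 * 2 = 1"
    unfolding inv_sqrt2_def by (simp flip: of_real_mult)
  then show ?thesis by (metis power_mult_distrib power_one)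
qed

text \<open>Expanding both Hadamard transforms gives a double sum over \<open>B, B' \<subseteq> Q\<close>; when the signs
  factor over \<open>B\<close> into \<open>\<plusminus>1\<close>-characters \<open>h B'\<close>, the sum over \<open>B\<close> vanishes unless all of them
  are trivial, which happens for the single \<open>B' = B0\<close>.\<close>

lemma hadamard_conjugate:
  assumes fin: "finite Q"
    and g: "\<And>B v. assign Q B (g v) = assign Q B v"
    and factor: "\<And>B B'. B \<subseteq> Q \<Longrightarrow> B' \<subseteq> Q \<Longrightarrow>
      walsh_sign w B * d (assign Q B w) * walsh_sign (g (assign Q B w)) B' = (\<Prod>c\<in>B. h B' c)"
    and sign: "\<And>B' c. B' \<subseteq> Q \<Longrightarrow> c \<in> Q \<Longrightarrow> h B' c = 1 \<or> h B' c = -1"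
    and uniq: "\<And>B'. B' \<subseteq> Q \<Longrightarrow> (\<forall>c\<in>Q. h B' c = 1) \<longleftrightarrow> B' = B0"
    and B0: "B0 \<subseteq> Q"
  shows "hadamard_on Q (\<lambda>v. d v * hadamard_on Q \<psi> (g v)) w = \<psi> (assign Q B0 w)"
proof -
  let ?k = "card Q"
  have "hadamard_on Q (\<lambda>v. d v * hadamard_on Q \<psi> (g v)) w =
     inv_sqrt2 ^ ?k * inv_sqrt2 ^ ?k * (\<Sum>B\<in>Pow Q. \<Sum>B'\<in>Pow Q.
        walsh_sign w B * d (assign Q B w) * walsh_sign (g (assign Q B w)) B' * \<psi> (assign Q B' w))"
    unfolding hadamard_on_def g assign_assign by (simp add: sum_distrib_left mult_ac)
  also have "(\<Sum>B\<in>Pow Q. \<Sum>B'\<in>Pow Q. walsh_sign w B * d (assign Q B w) *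
        walsh_sign (g (assign Q B w)) B' * \<psi> (assign Q B' w)) =
      (\<Sum>B'\<in>Pow Q. (\<Sum>B\<in>Pow Q. \<Prod>c\<in>B. h B' c) * \<psi> (assign Q B' w))"
    by (subst sum.swap) (auto intro!: sum.cong simp: factor sum_distrib_right)
  also have "\<dots> = 2 ^ ?k * \<psi> (assign Q B0 w)"
    by (rule walsh_delta[OF fin B0 sign uniq])
  finally show ?thesis
    by (simp add: inv_sqrt2_pow_sq mult.assoc[symmetric])
qed

lemma hadamard_phase_hadamard:
  assumes fin: "finite Q"
    and d: "\<And>B. B \<subseteq> Q \<Longrightarrow> d (assign Q B w) = (\<Prod>a\<in>B. if f a then -1 else 1)"
  shows "hadamard_on Q (\<lambda>v. d v * hadamard_on Q \<phi> v) w =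
    \<phi> (\<lambda>j. if j \<in> Q \<and> f j then \<not> w j else w j)"
proof -
  let ?h = "\<lambda>B' c. (if w c then -1 else 1) * (if f c then -1 else 1) *
             (if c \<in> B' then -1 else (1::complex))"
  define B0 where "B0 = {c\<in>Q. w c \<noteq> f c}"
  have "hadamard_on Q (\<lambda>v. d v * hadamard_on Q \<phi> (id v)) w = \<phi> (assign Q B0 w)"
  proof (rule hadamard_conjugate[OF fin, where h="?h"])
    fix B B' assume B: "B \<subseteq> Q" and B': "B' \<subseteq> Q"
    have "walsh_sign (assign Q B w) B' = (\<Prod>a\<in>B. if a \<in> B' then -1 else 1)"
      using B B' fin finite_subset[of B Q] finite_subset[of B' Q]
      by (simp add: walsh_sign_assign prod_sign_swap)
    then show "walsh_sign w B * d (assign Q B w) * walsh_sign (id (assign Q B w)) B' =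
        (\<Prod>c\<in>B. ?h B' c)"
      using d[OF B] by (simp add: walsh_sign_def prod.distrib)
  next
    fix B' assume "B' \<subseteq> Q"
    then show "(\<forall>c\<in>Q. ?h B' c = 1) \<longleftrightarrow> B' = B0"
      by (auto simp: B0_def split: if_splits)
  qed (auto simp: B0_def)
  moreover have "assign Q B0 w = (\<lambda>j. if j \<in> Q \<and> f j then \<not> w j else w j)"
    by (auto simp: assign_def B0_def fun_eq_iff)
  ultimately show ?thesis by simp
qed

lemma hadamard_on_involution:
  assumes "finite Q"
  shows "hadamard_on Q (hadamard_on Q \<psi>) = \<psi>"
proof
  fix w
  have "hadamard_on Q (\<lambda>v. 1 * hadamard_on Q \<psi> v) w =
      \<psi> (\<lambda>j. if j \<in> Q \<and> False then \<not> w j else w j)"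
    by (rule hadamard_phase_hadamard[OF assms]) simp
  then show "hadamard_on Q (hadamard_on Q \<psi>) w = \<psi> w" by simp
qed

lemma hadamard_on_zero:
  assumes "\<And>B. B \<subseteq> Q \<Longrightarrow> \<psi> (assign Q B v) = 0"
  shows "hadamard_on Q \<psi> v = 0"
  unfolding hadamard_on_def using assms by simp

lemma assign_eq_clean_iff:
  assumes "\<forall>a\<in>Y. \<not> w a" "B \<subseteq> Y"
  shows "assign Y B u = w \<longleftrightarrow> B = {} \<and> assign Y {} u = w"
proof
  assume eq: "assign Y B u = w"
  have "a \<notin> B" for a
    using assms fun_cong[OF eq, of a] by (auto simp: assign_def)
  then have "B = {}" by blast
  then show "B = {} \<and> assign Y {} u = w" using eq by simp
qed simp

lemma hadamard_on_ket:
  assumes fin: "finite Y" and clean: "\<forall>a\<in>Y. \<not> w a"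
  shows "hadamard_on Y (ket w) = (\<lambda>u. if assign Y {} u = w then inv_sqrt2 ^ card Y else 0)"
proof
  fix u
  have "(\<Sum>B\<in>Pow Y. walsh_sign u B * ket w (assign Y B u)) =
      (\<Sum>B\<in>Pow Y. if B = {} then (if assign Y {} u = w then 1 else 0) else 0)"
  proof (rule sum.cong)
    fix B assume "B \<in> Pow Y"
    then have "assign Y B u = w \<longleftrightarrow> B = {} \<and> assign Y {} u = w"
      using assign_eq_clean_iff[OF clean] by blast
    then show "walsh_sign u B * ket w (assign Y B u) =
        (if B = {} then (if assign Y {} u = w then 1 else 0) else 0)"
      by (auto simp: ket_def walsh_sign_def)
  qed simp
  also have "\<dots> = (if assign Y {} u = w then 1 else 0)" using fin by simp
  finally show "hadamard_on Y (ket w) u = (if assign Y {} u = w then inv_sqrt2 ^ card Y else 0)"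
    by (simp add: hadamard_on_def)
qed

lemma hadamard_diagonal_hadamard_ket:
  assumes fin: "finite Y" and clean: "\<forall>a\<in>Y. \<not> w a"
    and D: "\<And>B. B \<subseteq> Y \<Longrightarrow> D (assign Y B w) = (\<Prod>a\<in>B. f a)"
  shows "hadamard_on Y (\<lambda>u. D u * hadamard_on Y (ket w) u) v =
    (if assign Y {} v = w
     then inv_sqrt2 ^ card Y * inv_sqrt2 ^ card Y * (\<Prod>a\<in>Y. 1 + (if v a then -1 else 1) * f a)
     else 0)"
proof (cases "assign Y {} v = w")
  case False
  have "hadamard_on Y (\<lambda>u. D u * hadamard_on Y (ket w) u) v = 0"
    by (rule hadamard_on_zero) (simp add: hadamard_on_ket[OF fin clean] False)
  then show ?thesis using False by simp
next
  case True
  have w: "assign Y B w = assign Y B v" for B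
  proof
    fix j
    show "assign Y B w j = assign Y B v j"
      using fun_cong[OF True, of j] by (cases "j \<in> Y") (simp_all add: assign_def)
  qed
  have "hadamard_on Y (\<lambda>u. D u * hadamard_on Y (ket w) u) v =
      inv_sqrt2 ^ card Y * inv_sqrt2 ^ card Y * (\<Sum>B\<in>Pow Y. walsh_sign v B * D (assign Y B w))"
    unfolding hadamard_on_ket[OF fin clean]
    by (simp add: hadamard_on_def True w sum_distrib_left mult_ac)
  also have "(\<Sum>B\<in>Pow Y. walsh_sign v B * D (assign Y B w)) =
      (\<Sum>B\<in>Pow Y. \<Prod>a\<in>B. (if v a then -1 else 1) * f a)"
    by (rule sum.cong) (simp_all add: D walsh_sign_def prod.distrib)
  finally show ?thesis
    using True by (simp add: sum_Pow_prod[OF fin])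
qed

section \<open>Fan-out layers\<close>

definition fanout_xor :: "nat set \<Rightarrow> (nat \<Rightarrow> nat) \<Rightarrow> basis \<Rightarrow> basis" where
  "fanout_xor T src w = (\<lambda>j. if j \<in> T then w j \<noteq> w (src j) else w j)"

definition parity_into :: "nat set \<Rightarrow> (nat \<Rightarrow> nat) \<Rightarrow> basis \<Rightarrow> basis" where
  "parity_into T src w = (\<lambda>j. w j \<noteq> odd (card {a\<in>T. src a = j \<and> w a}))"

lemma fanout_xor_involution:
  assumes "\<And>j. j \<in> T \<Longrightarrow> src j \<notin> T"
  shows "fanout_xor T src (fanout_xor T src w) = w"
  using assms by (auto simp: fanout_xor_def fun_eq_iff)

lemma parity_into_unchanged:
  assumes "\<And>a. a \<in> T \<Longrightarrow> src a \<noteq> j"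
  shows "parity_into T src w j = w j"
proof -
  have "{a\<in>T. src a = j \<and> w a} = {}" using assms by blast
  then show ?thesis unfolding parity_into_def by (simp only: card.empty) simp
qed

lemma parity_into_involution:
  assumes "\<And>j. j \<in> T \<Longrightarrow> src j \<notin> T"
  shows "parity_into T src (parity_into T src w) = w"
proof
  fix j
  have "parity_into T src w a = w a" if "a \<in> T" for a
    using assms that by (intro parity_into_unchanged) blast
  then have "{a\<in>T. src a = j \<and> parity_into T src w a} = {a\<in>T. src a = j \<and> w a}"
    by auto
  then show "parity_into T src (parity_into T src w) j = w j"
    by (cases "w j") (simp_all add: parity_into_def)
qed

definition fanouts :: "(nat \<times> nat list) list \<Rightarrow> layer" where
  "fanouts F = map (\<lambda>(y, ts). FanOut y ts) F"

lemma apply_fanouts: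
  assumes "\<forall>f\<in>set F. (\<forall>j\<in>set (snd f). src j = fst f) \<and> fst f \<notin> set (concat (map snd F))"
    and "distinct (concat (map snd F))"
  shows "apply_layer (fanouts F) \<psi> = (\<lambda>w. \<psi> (fanout_xor (set (concat (map snd F))) src w))"
  using assms
proof (induction F arbitrary: \<psi>)
  case Nil
  then show ?case by (simp add: fanouts_def apply_layer_Nil fanout_xor_def)
next
  case (Cons yts F)
  obtain y ts where yts: "yts = (y, ts)" by fastforce
  let ?T = "set (concat (map snd F))"
  have IH: "apply_layer (fanouts F) \<phi> = (\<lambda>w. \<phi> (fanout_xor ?T src w))" for \<phi>
    using Cons by auto
  have y: "y \<notin> ?T" "y \<notin> set ts" and src: "\<forall>j\<in>set ts. src j = y"
    and disj: "set ts \<inter> ?T = {}"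
    using Cons.prems yts by auto
  have step: "(\<lambda>i. if i \<in> set ts then fanout_xor ?T src w i \<noteq> fanout_xor ?T src w y
      else fanout_xor ?T src w i) = fanout_xor (set ts \<union> ?T) src w" for w
    using y src disj by (auto simp: fanout_xor_def fun_eq_iff)
  have "apply_layer (fanouts (yts # F)) \<psi> = apply_layer (fanouts F) (apply_gate (FanOut y ts) \<psi>)"
    by (simp add: yts fanouts_def apply_layer_Cons del: apply_gate.simps)
  also have "\<dots> = (\<lambda>w. apply_gate (FanOut y ts) \<psi> (fanout_xor ?T src w))"
    by (rule IH)
  also have "\<dots> = (\<lambda>w. \<psi> (fanout_xor (set ts \<union> ?T) src w))"
    by (simp only: apply_gate.simps step)
  finally show ?case by (simp add: yts)
qed

lemma prod_sign_fibers:
  assumes "finite X" "finite B"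
  shows "(\<Prod>a\<in>X. if P a \<and> src a \<in> B then (-1::complex) else 1) =
         (\<Prod>c\<in>B. (-1) ^ card {a\<in>X. P a \<and> src a = c})"
proof -
  let ?S = "{a\<in>X. P a \<and> src a \<in> B}"
  have "card ?S = (\<Sum>c\<in>B. card {a\<in>X. P a \<and> src a = c})"
  proof -
    have "(\<Sum>c\<in>B. \<Sum>x | x \<in> ?S \<and> src x = c. (1::nat)) = (\<Sum>x\<in>?S. 1)"
      by (rule sum.group) (use assms in auto)
    moreover have "{x. x \<in> ?S \<and> src x = c} = {a\<in>X. P a \<and> src a = c}" if "c \<in> B" for c
      using that by auto
    ultimately show ?thesis by simp
  qed
  moreover have "(\<Prod>a\<in>X. if P a \<and> src a \<in> B then (-1::complex) else 1) = (\<Prod>a\<in>?S. -1)"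
    using assms(1) by (rule prod.inter_filter[symmetric])
  ultimately show ?thesis by (simp add: power_sum)
qed

lemma walsh_sign_fanout_xor_assign:
  assumes "finite B" "finite B'" "B' \<subseteq> Q" and src: "\<And>a. a \<in> T \<Longrightarrow> src a \<in> Q"
  shows "walsh_sign w B * walsh_sign (fanout_xor T src (assign Q B w)) B' =
    (\<Prod>c\<in>B. (if w c then -1 else 1) * (if c \<in> B' then -1 else 1) *
       (-1) ^ card {a\<in>B'. a \<in> T \<and> src a = c})"
proof -
  have "walsh_sign (fanout_xor T src (assign Q B w)) B' =
      (\<Prod>a\<in>B'. if (a \<in> B) \<noteq> (a \<in> T \<and> src a \<in> B) then -1 else 1)"
    unfolding walsh_sign_def using assms(3) src
    by (intro prod.cong) (auto simp: fanout_xor_def assign_def)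
  also have "\<dots> = (\<Prod>a\<in>B'. if a \<in> B then -1 else 1) *
      (\<Prod>a\<in>B'. if a \<in> T \<and> src a \<in> B then -1 else 1)"
    by (subst prod.distrib[symmetric]) (rule prod.cong; auto)
  also have "\<dots> = (\<Prod>c\<in>B. if c \<in> B' then -1 else 1) *
      (\<Prod>c\<in>B. (-1) ^ card {a\<in>B'. a \<in> T \<and> src a = c})"
    using assms(1,2) by (simp add: prod_sign_swap prod_sign_fibers)
  finally show ?thesis by (simp add: walsh_sign_def prod.distrib mult.assoc)
qed

text \<open>Targets are never sources, so a solution agrees with \<open>w\<close> on the targets, and this
  determines it on every other qubit.\<close>

lemma fanout_parity_solution_iff:
  assumes TQ: "T \<subseteq> Q" and src: "\<And>j. j \<in> T \<Longrightarrow> src j \<notin> T" and B': "B' \<subseteq> Q"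
  shows "(\<forall>c\<in>Q. c \<in> B' \<longleftrightarrow> w c \<noteq> odd (card {a\<in>B'. a \<in> T \<and> src a = c})) \<longleftrightarrow>
    B' = {c\<in>Q. parity_into T src w c}"
    (is "(\<forall>c\<in>Q. c \<in> B' \<longleftrightarrow> w c \<noteq> odd (?N c)) \<longleftrightarrow> B' = ?B0")
proof -
  have N_T: "?N a = 0" if "a \<in> T" for a
  proof -
    have "{x\<in>B'. x \<in> T \<and> src x = a} = {}" using src that by blast
    then show ?thesis by (simp only: card.empty)
  qed
  have N_w: "?N c = card {a\<in>T. src a = c \<and> w a}" if "\<forall>a\<in>T. a \<in> B' \<longleftrightarrow> w a" for c
  proof -
    have "{x\<in>B'. x \<in> T \<and> src x = c} = {a\<in>T. src a = c \<and> w a}" using that by blast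
    then show ?thesis by simp
  qed
  show ?thesis
  proof
    assume H: "\<forall>c\<in>Q. c \<in> B' \<longleftrightarrow> w c \<noteq> odd (?N c)"
    then have "\<forall>a\<in>T. a \<in> B' \<longleftrightarrow> w a" using TQ N_T by auto
    note N_w = N_w[OF this]
    show "B' = ?B0"
    proof
      show "B' \<subseteq> ?B0" using B' H N_w by (auto simp: parity_into_def)
      show "?B0 \<subseteq> B'" using H N_w by (auto simp: parity_into_def)
    qed
  next
    assume B'B0: "B' = ?B0"
    have "parity_into T src w a = w a" if "a \<in> T" for a
      using src that by (intro parity_into_unchanged) blast
    then have "\<forall>a\<in>T. a \<in> B' \<longleftrightarrow> w a" using TQ B'B0 by auto
    note N_w = N_w[OF this]
    show "\<forall>c\<in>Q. c \<in> B' \<longleftrightarrow> w c \<noteq> odd (?N c)"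
      using B'B0 N_w by (auto simp: parity_into_def)
  qed
qed

lemma hadamard_fanout_hadamard:
  assumes fin: "finite Q" and TQ: "T \<subseteq> Q"
    and src: "\<And>j. j \<in> T \<Longrightarrow> src j \<in> Q \<and> src j \<notin> T"
  shows "hadamard_on Q (\<lambda>w. hadamard_on Q \<psi> (fanout_xor T src w)) =
    (\<lambda>w. \<psi> (parity_into T src w))"
proof
  fix w
  let ?N = "\<lambda>B' c. card {a\<in>B'. a \<in> T \<and> src a = c}"
  let ?h = "\<lambda>B' c. (if w c then -1 else 1) * (if c \<in> B' then -1 else (1::complex)) * (-1) ^ ?N B' c"
  let ?B0 = "{c\<in>Q. parity_into T src w c}"
  have h_one: "?h B' c = 1 \<longleftrightarrow> c \<in> B' \<longleftrightarrow> w c \<noteq> odd (?N B' c)" for B' c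
    by (cases "w c"; cases "c \<in> B'"; cases "even (?N B' c)") auto
  have "hadamard_on Q (\<lambda>v. 1 * hadamard_on Q \<psi> (fanout_xor T src v)) w = \<psi> (assign Q ?B0 w)"
  proof (rule hadamard_conjugate[OF fin, where h="?h"])
    fix B v
    show "assign Q B (fanout_xor T src v) = assign Q B v"
      using TQ by (auto simp: assign_def fanout_xor_def fun_eq_iff)
  next
    fix B B' assume "B \<subseteq> Q" "B' \<subseteq> Q"
    then show "walsh_sign w B * 1 * walsh_sign (fanout_xor T src (assign Q B w)) B' =
        (\<Prod>c\<in>B. ?h B' c)"
      using walsh_sign_fanout_xor_assign[of B B' Q T src w] fin src by (simp add: finite_subset)
  next
    fix B' assume B': "B' \<subseteq> Q"
    show "(\<forall>c\<in>Q. ?h B' c = 1) \<longleftrightarrow> B' = ?B0"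
      unfolding h_one by (rule fanout_parity_solution_iff[OF TQ _ B']) (use src in blast)
  next
    fix B' c
    show "?h B' c = 1 \<or> ?h B' c = -1"
      by (cases "w c"; cases "c \<in> B'"; cases "even (?N B' c)") auto
  qed blast
  moreover have "assign Q ?B0 w = parity_into T src w"
  proof
    fix j
    show "assign Q ?B0 w j = parity_into T src w j"
    proof (cases "j \<in> Q")
      case False
      then have "parity_into T src w j = w j" using src by (intro parity_into_unchanged) blast
      then show ?thesis using False by (simp add: assign_def)
    qed (simp add: assign_def)
  qed
  ultimately show "hadamard_on Q (\<lambda>w. hadamard_on Q \<psi> (fanout_xor T src w)) w =
      \<psi> (parity_into T src w)"
    by simp
qed

fun qubit_list :: "gate \<Rightarrow> nat list" where
  "qubit_list (G1 q U) = [q]"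
| "qubit_list (CNOT c t) = [c, t]"
| "qubit_list (FanOut y ts) = y # ts"

fun gate_admissible :: "gate \<Rightarrow> bool" where
  "gate_admissible (G1 q U) = unitary2 U"
| "gate_admissible (CNOT c t) = True"
| "gate_admissible (FanOut y ts) = (ts \<noteq> [])"

lemma set_qubit_list: "set (qubit_list g) = qubits g"
  by (cases g) auto

lemma distinct_concat_nth_disjoint:
  "distinct (concat xs) \<Longrightarrow> i < length xs \<Longrightarrow> j < length xs \<Longrightarrow> i \<noteq> j \<Longrightarrow>
   set (xs ! i) \<inter> set (xs ! j) = {}"
proof (induction xs arbitrary: i j)
  case Nil
  then show ?case by simp
next
  case (Cons a xs)
  show ?case
  proof (cases i)
    case 0
    then obtain j' where "j = Suc j'" using Cons by (cases j) auto
    moreover have "xs ! j' \<in> set xs" using Cons.prems \<open>j = Suc j'\<close> by auto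
    ultimately show ?thesis using Cons.prems(1) 0 by (simp add: set_concat) blast
  next
    case (Suc i')
    show ?thesis
    proof (cases j)
      case 0
      moreover have "xs ! i' \<in> set xs" using Cons.prems Suc by auto
      ultimately show ?thesis using Cons.prems(1) Suc by (simp add: set_concat) blast
    next
      case (Suc j')
      then show ?thesis using Cons \<open>i = Suc i'\<close> by auto
    qed
  qed
qed

lemma distinct_concat_map:
  assumes "distinct xs" "\<And>x. x \<in> set xs \<Longrightarrow> distinct (f x)"
    "\<And>x y. x \<in> set xs \<Longrightarrow> y \<in> set xs \<Longrightarrow> x \<noteq> y \<Longrightarrow> set (f x) \<inter> set (f y) = {}"
  shows "distinct (concat (map f xs))"
  using assms by (induction xs) (fastforce simp: set_concat)+

lemma wf_layerI:
  assumes "\<forall>g\<in>set L. gate_admissible g" "distinct (concat (map qubit_list L))"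
  shows "wf_layer L"
  unfolding wf_layer_def
proof (intro conjI allI impI ballI)
  fix g assume g: "g \<in> set L"
  then have "distinct (qubit_list g)" using assms(2) by (auto simp: distinct_concat_iff)
  then show "wf_gate g" using assms(1) g by (cases g) auto
next
  fix i j assume ij: "i < length L \<and> j < length L \<and> i \<noteq> j"
  then have "set (map qubit_list L ! i) \<inter> set (map qubit_list L ! j) = {}"
    by (intro distinct_concat_nth_disjoint[OF assms(2)]) auto
  then show "qubits (L ! i) \<inter> qubits (L ! j) = {}"
    using ij by (simp add: set_qubit_list)
qed

lemma wf_hadamard_layer:
  assumes "distinct qs"
  shows "wf_layer (hadamard_layer qs)"
proof (rule wf_layerI)
  show "\<forall>g\<in>set (hadamard_layer qs). gate_admissible g"
    by (auto simp: hadamard_layer_def unitary2_hadamard)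
  have "concat (map qubit_list (hadamard_layer qs)) = qs"
    by (induction qs) (auto simp: hadamard_layer_def)
  then show "distinct (concat (map qubit_list (hadamard_layer qs)))" using assms by simp
qed

lemma wf_fanouts:
  assumes "\<forall>f\<in>set F. snd f \<noteq> []" "distinct (concat (map (\<lambda>f. fst f # snd f) F))"
  shows "wf_layer (fanouts F)"
proof (rule wf_layerI)
  show "\<forall>g\<in>set (fanouts F). gate_admissible g"
    using assms(1) by (auto simp: fanouts_def)
  have "concat (map qubit_list (fanouts F)) = concat (map (\<lambda>f. fst f # snd f) F)"
    by (induction F) (auto simp: fanouts_def)
  then show "distinct (concat (map qubit_list (fanouts F)))" using assms(2) by simp
qed

lemma wf_circuit_append: "wf_circuit (C1 @ C2) \<longleftrightarrow> wf_circuit C1 \<and> wf_circuit C2"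
  by (auto simp: wf_circuit_def)

lemma wf_circuit_Cons: "wf_circuit (L # C) \<longleftrightarrow> wf_layer L \<and> wf_circuit C"
  by (simp add: wf_circuit_def)

lemma wf_circuit_Nil: "wf_circuit []"
  by (simp add: wf_circuit_def)

definition layer_size :: "layer \<Rightarrow> nat" where
  "layer_size L = sum_list (map gate_size L)"

lemma csize_Nil: "csize [] = 0"
  by (simp add: csize_def)

lemma csize_Cons: "csize (L # C) = layer_size L + csize C"
  by (simp add: csize_def layer_size_def)

lemma csize_append: "csize (C1 @ C2) = csize C1 + csize C2"
  by (simp add: csize_def)

lemma layer_size_hadamard_layer: "layer_size (hadamard_layer qs) = length qs"
  by (induction qs) (auto simp: layer_size_def hadamard_layer_def)

lemma layer_size_fanouts:
  "layer_size (fanouts F) = sum_list (map (\<lambda>f. length (snd f) + 1) F)"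
  by (induction F) (auto simp: layer_size_def fanouts_def)

section \<open>Parity-phase circuits\<close>

lemma apply_phase_layer:
  "apply_layer (map (\<lambda>i. G1 (r i) (phase_shift (\<alpha> i))) is) \<psi> =
   (\<lambda>w. (\<Prod>i\<leftarrow>is. if w (r i) then cis (\<alpha> i) else 1) * \<psi> w)"
  by (induction "is" arbitrary: \<psi>)
    (simp_all add: apply_layer_Nil apply_layer_Cons apply_gate_phase_shift mult_ac
      del: apply_gate.simps)

type_synonym parity_terms = "(nat list \<times> real) list"

definition parity_phase :: "parity_terms \<Rightarrow> basis \<Rightarrow> real" where
  "parity_phase T w = sum_list (map (\<lambda>(S, a). if odd (card {q \<in> set S. w q}) then a else 0) T)"

definition term_qubits :: "parity_terms \<Rightarrow> nat \<Rightarrow> nat list" where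
  "term_qubits T i = map fst T ! i"

definition term_angle :: "parity_terms \<Rightarrow> nat \<Rightarrow> real" where
  "term_angle T i = map snd T ! i"

text \<open>Term \<open>i\<close> owns the ancillas \<open>anc i 0\<close>, its root, and \<open>anc i (Suc p)\<close>, a copy of its
  \<open>p\<close>-th qubit. The circuit copies the term qubits into the copies, collects the parity of the
  copies in the root (a fan-out conjugated by Hadamards), applies the angle there and uncomputes.
  \<open>copy_source\<close> and \<open>copy_root\<close> invert this numbering and are meaningful on the copies only.\<close>

definition anc_index :: "parity_terms \<Rightarrow> (nat \<times> nat) set" where
  "anc_index T = {(i, p). i < length T \<and> p \<le> length (term_qubits T i)}"

definition anc_qubits :: "parity_terms \<Rightarrow> (nat \<Rightarrow> nat \<Rightarrow> nat) \<Rightarrow> nat set" where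
  "anc_qubits T anc = (\<lambda>(i, p). anc i p) ` anc_index T"

definition anc_copies :: "parity_terms \<Rightarrow> (nat \<Rightarrow> nat \<Rightarrow> nat) \<Rightarrow> nat set" where
  "anc_copies T anc = {anc i (Suc p) |i p. i < length T \<and> p < length (term_qubits T i)}"

definition copy_source :: "parity_terms \<Rightarrow> (nat \<Rightarrow> nat \<Rightarrow> nat) \<Rightarrow> nat \<Rightarrow> nat" where
  "copy_source T anc j =
     (case inv_into (anc_index T) (\<lambda>(i, p). anc i p) j of (i, p) \<Rightarrow> term_qubits T i ! (p - 1))"

definition copy_root :: "parity_terms \<Rightarrow> (nat \<Rightarrow> nat \<Rightarrow> nat) \<Rightarrow> nat \<Rightarrow> nat" where
  "copy_root T anc j = (case inv_into (anc_index T) (\<lambda>(i, p). anc i p) j of (i, p) \<Rightarrow> anc i 0)"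

definition copies_of :: "parity_terms \<Rightarrow> (nat \<Rightarrow> nat \<Rightarrow> nat) \<Rightarrow> nat \<Rightarrow> nat list" where
  "copies_of T anc q = concat (map (\<lambda>i. map (\<lambda>p. anc i (Suc p))
      (filter (\<lambda>p. term_qubits T i ! p = q) [0..<length (term_qubits T i)])) [0..<length T])"

definition copy_fanouts :: "parity_terms \<Rightarrow> (nat \<Rightarrow> nat \<Rightarrow> nat) \<Rightarrow> (nat \<times> nat list) list" where
  "copy_fanouts T anc = map (\<lambda>q. (q, copies_of T anc q))
     (filter (\<lambda>q. copies_of T anc q \<noteq> []) (remdups (concat (map fst T))))"

definition root_fanouts :: "parity_terms \<Rightarrow> (nat \<Rightarrow> nat \<Rightarrow> nat) \<Rightarrow> (nat \<times> nat list) list" where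
  "root_fanouts T anc =
     map (\<lambda>i. (anc i 0, map (\<lambda>p. anc i (Suc p)) [0..<length (term_qubits T i)])) [0..<length T]"

definition anc_list :: "parity_terms \<Rightarrow> (nat \<Rightarrow> nat \<Rightarrow> nat) \<Rightarrow> nat list" where
  "anc_list T anc = concat (map (\<lambda>f. fst f # snd f) (root_fanouts T anc))"

definition angle_layer :: "parity_terms \<Rightarrow> (nat \<Rightarrow> nat \<Rightarrow> nat) \<Rightarrow> layer" where
  "angle_layer T anc = map (\<lambda>i. G1 (anc i 0) (phase_shift (term_angle T i))) [0..<length T]"

definition parity_phase_circuit :: "parity_terms \<Rightarrow> (nat \<Rightarrow> nat \<Rightarrow> nat) \<Rightarrow> circuit" where
  "parity_phase_circuit T anc =
    [fanouts (copy_fanouts T anc), hadamard_layer (anc_list T anc), fanouts (root_fanouts T anc),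
     hadamard_layer (anc_list T anc), angle_layer T anc, hadamard_layer (anc_list T anc),
     fanouts (root_fanouts T anc), hadamard_layer (anc_list T anc), fanouts (copy_fanouts T anc)]"

definition root_parity :: "parity_terms \<Rightarrow> (nat \<Rightarrow> nat \<Rightarrow> nat) \<Rightarrow> basis \<Rightarrow> nat \<Rightarrow> bool" where
  "root_parity T anc w i = parity_into (anc_copies T anc) (copy_root T anc)
     (fanout_xor (anc_copies T anc) (copy_source T anc) w) (anc i 0)"

definition root_phase :: "parity_terms \<Rightarrow> (nat \<Rightarrow> nat \<Rightarrow> nat) \<Rightarrow> basis \<Rightarrow> complex" where
  "root_phase T anc w =
     (\<Prod>i\<leftarrow>[0..<length T]. if root_parity T anc w i then cis (term_angle T i) else 1)"

locale parity_phase_gadget =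
  fixes T :: parity_terms and anc :: "nat \<Rightarrow> nat \<Rightarrow> nat"
  assumes term_qubits_ok: "\<And>i. i < length T \<Longrightarrow> term_qubits T i \<noteq> [] \<and> distinct (term_qubits T i)"
    and anc_inj: "inj_on (\<lambda>(i, p). anc i p) (anc_index T)"
    and anc_fresh: "\<And>i p. (i, p) \<in> anc_index T \<Longrightarrow> anc i p \<notin> set (concat (map fst T))"
begin

lemma anc_injD:
  "anc i p = anc i' p' \<Longrightarrow> i < length T \<Longrightarrow> p \<le> length (term_qubits T i) \<Longrightarrow>
   i' < length T \<Longrightarrow> p' \<le> length (term_qubits T i') \<Longrightarrow> i = i' \<and> p = p'"
  using inj_onD[OF anc_inj, of "(i, p)" "(i', p')"] by (auto simp: anc_index_def)

lemma anc_not_term_qubit: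
  "i < length T \<Longrightarrow> p \<le> length (term_qubits T i) \<Longrightarrow> anc i p \<notin> set (concat (map fst T))"
  using anc_fresh by (simp add: anc_index_def)

lemma term_qubit_mem:
  assumes "i < length T" "p < length (term_qubits T i)"
  shows "term_qubits T i ! p \<in> set (concat (map fst T))"
proof -
  have "term_qubits T i \<in> set (map fst T)" using assms(1) by (simp add: term_qubits_def)
  moreover have "term_qubits T i ! p \<in> set (term_qubits T i)" using assms(2) by simp
  ultimately show ?thesis unfolding set_concat by blast
qed

lemma anc_index_inv:
  assumes "i < length T" "p \<le> length (term_qubits T i)"
  shows "inv_into (anc_index T) (\<lambda>(i, p). anc i p) (anc i p) = (i, p)"
  using inv_into_f_f[OF anc_inj, of "(i, p)"] assms by (simp add: anc_index_def)

lemma copy_source_anc: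
  "i < length T \<Longrightarrow> p < length (term_qubits T i) \<Longrightarrow> copy_source T anc (anc i (Suc p)) = term_qubits T i ! p"
  by (simp add: copy_source_def anc_index_inv)

lemma copy_root_anc:
  "i < length T \<Longrightarrow> p \<le> length (term_qubits T i) \<Longrightarrow> copy_root T anc (anc i p) = anc i 0"
  by (simp add: copy_root_def anc_index_inv)

lemma set_copies_of:
  "set (copies_of T anc q) =
    {anc i (Suc p) |i p. i < length T \<and> p < length (term_qubits T i) \<and> term_qubits T i ! p = q}"
  unfolding copies_of_def by (auto simp: set_concat) blast

lemma distinct_copies_of: "distinct (copies_of T anc q)"
  unfolding copies_of_def
  by (rule distinct_concat_map) (auto simp: distinct_map inj_on_def dest: anc_injD)

lemma copies_of_disjoint: "q \<noteq> q' \<Longrightarrow> set (copies_of T anc q) \<inter> set (copies_of T anc q') = {}"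
  unfolding set_copies_of by (auto dest: anc_injD)

lemma term_qubit_not_copy: "q \<in> set (concat (map fst T)) \<Longrightarrow> q \<notin> anc_copies T anc"
  unfolding anc_copies_def using anc_not_term_qubit by fastforce

lemma anc_root_not_copy: "i < length T \<Longrightarrow> anc i 0 \<notin> anc_copies T anc"
  by (auto simp: anc_copies_def dest: anc_injD)

lemma anc_root_mem: "i < length T \<Longrightarrow> anc i 0 \<in> anc_qubits T anc"
  by (force simp: anc_qubits_def anc_index_def)

lemma anc_copies_subset: "anc_copies T anc \<subseteq> anc_qubits T anc"
  by (force simp: anc_copies_def anc_qubits_def anc_index_def)

lemma finite_anc_index: "finite (anc_index T)"
proof -
  have "anc_index T = (SIGMA i:{..<length T}. {..length (term_qubits T i)})"
    by (auto simp: anc_index_def)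
  then show ?thesis by auto
qed

lemma finite_anc_qubits: "finite (anc_qubits T anc)"
  by (simp add: anc_qubits_def finite_anc_index)

lemma copy_source_copy:
  assumes "j \<in> anc_copies T anc"
  shows "copy_source T anc j \<notin> anc_copies T anc"
proof -
  obtain i p where "i < length T" "p < length (term_qubits T i)" "j = anc i (Suc p)"
    using assms by (auto simp: anc_copies_def)
  then show ?thesis using copy_source_anc term_qubit_mem term_qubit_not_copy by simp
qed

lemma copy_root_copy:
  assumes "j \<in> anc_copies T anc"
  shows "copy_root T anc j \<in> anc_qubits T anc \<and> copy_root T anc j \<notin> anc_copies T anc"
proof -
  obtain i p where "i < length T" "p < length (term_qubits T i)" "j = anc i (Suc p)"
    using assms by (auto simp: anc_copies_def)
  then show ?thesis using copy_root_anc anc_root_mem anc_root_not_copy by simp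
qed

lemma targets_copy_fanouts: "set (concat (map snd (copy_fanouts T anc))) = anc_copies T anc"
proof
  show "set (concat (map snd (copy_fanouts T anc))) \<subseteq> anc_copies T anc"
    unfolding copy_fanouts_def anc_copies_def by (auto simp: set_copies_of)
  show "anc_copies T anc \<subseteq> set (concat (map snd (copy_fanouts T anc)))"
  proof
    fix x assume "x \<in> anc_copies T anc"
    then obtain i p where x: "x = anc i (Suc p)" "i < length T" "p < length (term_qubits T i)"
      by (auto simp: anc_copies_def)
    let ?q = "term_qubits T i ! p"
    have "x \<in> set (copies_of T anc ?q)" using x unfolding set_copies_of by blast
    moreover have "?q \<in> set (concat (map fst T))" using term_qubit_mem[OF x(2,3)] .
    ultimately show "x \<in> set (concat (map snd (copy_fanouts T anc)))"
      unfolding copy_fanouts_def by force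
  qed
qed

lemma targets_root_fanouts: "set (concat (map snd (root_fanouts T anc))) = anc_copies T anc"
  unfolding root_fanouts_def anc_copies_def by (auto; blast)

lemma anc_list_eq:
  "anc_list T anc = concat (map (\<lambda>i. map (anc i) [0..<Suc (length (term_qubits T i))]) [0..<length T])"
proof -
  have "anc i 0 # map (\<lambda>p. anc i (Suc p)) [0..<l] = map (anc i) [0..<Suc l]" for i l
    by (simp add: upt_conv_Cons map_Suc_upt[symmetric] del: upt_Suc)
  then show ?thesis by (simp add: anc_list_def root_fanouts_def o_def del: upt_Suc)
qed

lemma set_anc_list: "set (anc_list T anc) = anc_qubits T anc"
proof
  show "set (anc_list T anc) \<subseteq> anc_qubits T anc"
  proof
    fix x assume "x \<in> set (anc_list T anc)"
    then obtain i p where "i < length T" "p < Suc (length (term_qubits T i))" "x = anc i p"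
      unfolding anc_list_eq by (auto simp del: upt_Suc)
    then show "x \<in> anc_qubits T anc"
      unfolding anc_qubits_def anc_index_def by (auto simp: image_iff less_Suc_eq_le)
  qed
  show "anc_qubits T anc \<subseteq> set (anc_list T anc)"
  proof
    fix x assume "x \<in> anc_qubits T anc"
    then obtain i p where ip: "i < length T" "p \<le> length (term_qubits T i)" "x = anc i p"
      unfolding anc_qubits_def anc_index_def by auto
    then have "x \<in> set (map (anc i) [0..<Suc (length (term_qubits T i))])" by (simp del: upt_Suc)
    then show "x \<in> set (anc_list T anc)" using ip unfolding anc_list_eq
      by (auto simp del: upt_Suc intro!: bexI[of _ i])
  qed
qed

lemma distinct_anc_list: "distinct (anc_list T anc)"
  unfolding anc_list_eq
proof (rule distinct_concat_map)
  fix i assume "i \<in> set [0..<length T]"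
  then show "distinct (map (anc i) [0..<Suc (length (term_qubits T i))])"
    by (auto simp: distinct_map inj_on_def dest: anc_injD simp del: upt_Suc)
next
  fix i j assume "i \<in> set [0..<length T]" "j \<in> set [0..<length T]" "i \<noteq> j"
  then show "set (map (anc i) [0..<Suc (length (term_qubits T i))]) \<inter>
      set (map (anc j) [0..<Suc (length (term_qubits T j))]) = {}"
    by (auto dest: anc_injD simp del: upt_Suc)
qed simp

lemma apply_copy_layer:
  "apply_layer (fanouts (copy_fanouts T anc)) \<psi> =
    (\<lambda>w. \<psi> (fanout_xor (anc_copies T anc) (copy_source T anc) w))"
proof -
  have "\<forall>f\<in>set (copy_fanouts T anc). (\<forall>j\<in>set (snd f). copy_source T anc j = fst f) \<and>
      fst f \<notin> set (concat (map snd (copy_fanouts T anc)))"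
    unfolding targets_copy_fanouts
    by (auto simp: copy_fanouts_def set_copies_of copy_source_anc term_qubit_not_copy)
  moreover have "distinct (concat (map snd (copy_fanouts T anc)))"
    unfolding copy_fanouts_def map_map o_def snd_conv
    by (rule distinct_concat_map) (auto simp: distinct_copies_of copies_of_disjoint)
  ultimately show ?thesis by (simp only: apply_fanouts targets_copy_fanouts)
qed

lemma apply_root_layer:
  "apply_layer (fanouts (root_fanouts T anc)) \<psi> =
    (\<lambda>w. \<psi> (fanout_xor (anc_copies T anc) (copy_root T anc) w))"
proof -
  have "\<forall>f\<in>set (root_fanouts T anc). (\<forall>j\<in>set (snd f). copy_root T anc j = fst f) \<and>
      fst f \<notin> set (concat (map snd (root_fanouts T anc)))"
    unfolding targets_root_fanouts
    by (auto simp: root_fanouts_def copy_root_anc anc_root_not_copy)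
  moreover have "distinct (concat (map snd (root_fanouts T anc)))"
    unfolding root_fanouts_def map_map o_def snd_conv
    by (rule distinct_concat_map) (auto simp: distinct_map inj_on_def dest: anc_injD)
  ultimately show ?thesis by (simp only: apply_fanouts targets_root_fanouts)
qed

lemma apply_anc_hadamards:
  "apply_layer (hadamard_layer (anc_list T anc)) \<psi> = hadamard_on (anc_qubits T anc) \<psi>"
  using apply_hadamard_layer[OF distinct_anc_list] by (simp add: set_anc_list)

lemma run_parity_phase_circuit:
  "run (parity_phase_circuit T anc) \<psi> = (\<lambda>w. root_phase T anc w * \<psi> w)"
proof -
  let ?C = "anc_copies T anc" and ?A = "anc_qubits T anc"
  let ?copy = "fanout_xor ?C (copy_source T anc)" and ?par = "parity_into ?C (copy_root T anc)"
  let ?ph = "\<lambda>w. \<Prod>i\<leftarrow>[0..<length T]. if w (anc i 0) then cis (term_angle T i) else 1"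
  have copy_copy: "?copy (?copy w) = w" for w
    by (rule fanout_xor_involution) (use copy_source_copy in blast)
  have par_par: "?par (?par w) = w" for w
    by (rule parity_into_involution) (use copy_root_copy in blast)
  have collect: "hadamard_on ?A (\<lambda>w. hadamard_on ?A \<phi> (fanout_xor ?C (copy_root T anc) w)) =
      (\<lambda>w. \<phi> (?par w))" for \<phi>
    by (rule hadamard_fanout_hadamard[OF finite_anc_qubits anc_copies_subset])
      (use copy_root_copy in blast)
  have "run (parity_phase_circuit T anc) \<psi> = (\<lambda>w. ?ph (?par (?copy w)) * \<psi> (?copy (?par (?par (?copy w)))))"
    by (simp add: run_def parity_phase_circuit_def apply_copy_layer apply_root_layer
        apply_anc_hadamards angle_layer_def apply_phase_layer collect)
  then show ?thesis by (simp add: copy_copy par_par root_parity_def root_phase_def)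
qed

lemma wf_parity_phase_circuit: "wf_circuit (parity_phase_circuit T anc)"
proof -
  have "wf_layer (fanouts (copy_fanouts T anc))"
  proof (rule wf_fanouts)
    show "\<forall>f\<in>set (copy_fanouts T anc). snd f \<noteq> []" by (auto simp: copy_fanouts_def)
    show "distinct (concat (map (\<lambda>f. fst f # snd f) (copy_fanouts T anc)))"
      unfolding copy_fanouts_def map_map o_def fst_conv snd_conv
    proof (rule distinct_concat_map)
      fix q assume "q \<in> set (filter (\<lambda>q. copies_of T anc q \<noteq> []) (remdups (concat (map fst T))))"
      then show "distinct (q # copies_of T anc q)"
        using term_qubit_not_copy distinct_copies_of
        by (auto simp: set_copies_of anc_copies_def)
    next
      fix q q' assume "q \<in> set (filter (\<lambda>q. copies_of T anc q \<noteq> []) (remdups (concat (map fst T))))"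
        "q' \<in> set (filter (\<lambda>q. copies_of T anc q \<noteq> []) (remdups (concat (map fst T))))" "q \<noteq> q'"
      then show "set (q # copies_of T anc q) \<inter> set (q' # copies_of T anc q') = {}"
        using term_qubit_not_copy copies_of_disjoint
        by (auto simp: set_copies_of anc_copies_def)
    qed simp
  qed
  moreover have "wf_layer (fanouts (root_fanouts T anc))"
  proof (rule wf_fanouts)
    show "\<forall>f\<in>set (root_fanouts T anc). snd f \<noteq> []"
      by (auto simp: root_fanouts_def term_qubits_ok)
    show "distinct (concat (map (\<lambda>f. fst f # snd f) (root_fanouts T anc)))"
      using distinct_anc_list by (simp only: anc_list_def)
  qed
  moreover have "wf_layer (angle_layer T anc)"
  proof (rule wf_layerI)
    show "\<forall>g\<in>set (angle_layer T anc). gate_admissible g"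
      by (auto simp: angle_layer_def unitary2_phase_shift)
    have "concat (map qubit_list (angle_layer T anc)) = map (\<lambda>i. anc i 0) [0..<length T]"
      by (simp add: angle_layer_def o_def)
    then show "distinct (concat (map qubit_list (angle_layer T anc)))"
      by (auto simp: distinct_map inj_on_def dest: anc_injD)
  qed
  ultimately show ?thesis
    by (simp add: parity_phase_circuit_def wf_circuit_def wf_hadamard_layer distinct_anc_list)
qed

lemma card_nth_filter:
  assumes "distinct xs"
  shows "card {p. p < length xs \<and> P (xs ! p)} = card {q \<in> set xs. P q}"
proof -
  have "inj_on (nth xs) {p. p < length xs \<and> P (xs ! p)}"
    using assms by (auto intro!: inj_onI simp: nth_eq_iff_index_eq)
  moreover have "nth xs ` {p. p < length xs \<and> P (xs ! p)} = {q \<in> set xs. P q}"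
    by (auto simp: in_set_conv_nth)
  ultimately show ?thesis by (metis card_image)
qed

lemma root_parity_clean:
  assumes clean: "\<forall>j\<in>anc_qubits T anc. \<not> w j" and i: "i < length T"
  shows "root_parity T anc w i = odd (card {q \<in> set (term_qubits T i). w q})"
proof -
  let ?v = "fanout_xor (anc_copies T anc) (copy_source T anc) w"
  let ?P = "{p. p < length (term_qubits T i) \<and> w (term_qubits T i ! p)}"
  have root: "\<not> ?v (anc i 0)"
    using clean anc_root_mem[OF i] anc_root_not_copy[OF i] by (simp add: fanout_xor_def)
  have clean_copy: "\<not> w a" if "a \<in> anc_copies T anc" for a
    using clean anc_copies_subset that by blast
  have "{a \<in> anc_copies T anc. copy_root T anc a = anc i 0 \<and> ?v a} = (\<lambda>p. anc i (Suc p)) ` ?P"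
  proof (intro equalityI subsetI)
    fix a assume a: "a \<in> {a \<in> anc_copies T anc. copy_root T anc a = anc i 0 \<and> ?v a}"
    then obtain i' p where ip: "i' < length T" "p < length (term_qubits T i')" "a = anc i' (Suc p)"
      by (auto simp: anc_copies_def)
    then have "i' = i" using a anc_injD[of i' 0 i 0] i by (auto simp: copy_root_anc)
    then show "a \<in> (\<lambda>p. anc i (Suc p)) ` ?P"
      using a ip clean_copy by (auto simp: fanout_xor_def copy_source_anc)
  next
    fix a assume "a \<in> (\<lambda>p. anc i (Suc p)) ` ?P"
    then obtain p where p: "p < length (term_qubits T i)" "w (term_qubits T i ! p)" "a = anc i (Suc p)"
      by auto
    then have "a \<in> anc_copies T anc" using i by (auto simp: anc_copies_def)
    then show "a \<in> {a \<in> anc_copies T anc. copy_root T anc a = anc i 0 \<and> ?v a}"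
      using p i clean_copy by (auto simp: fanout_xor_def copy_source_anc copy_root_anc)
  qed
  moreover have "card ((\<lambda>p. anc i (Suc p)) ` ?P) = card ?P"
    by (rule card_image) (use i in \<open>auto intro!: inj_onI dest: anc_injD\<close>)
  moreover have "card ?P = card {q \<in> set (term_qubits T i). w q}"
    using term_qubits_ok[OF i] by (simp add: card_nth_filter)
  ultimately show ?thesis using root by (simp add: root_parity_def parity_into_def)
qed

lemma root_phase_clean:
  assumes clean: "\<forall>j\<in>anc_qubits T anc. \<not> w j"
  shows "root_phase T anc w = cis (parity_phase T w)"
proof -
  let ?g = "\<lambda>(S, a). if odd (card {q \<in> set S. w q}) then cis a else (1::complex)"
  have "map (\<lambda>i. if root_parity T anc w i then cis (term_angle T i) else 1) [0..<length T] =
      map (\<lambda>i. ?g (T ! i)) [0..<length T]"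
    by (rule map_cong)
      (auto simp: root_parity_clean[OF clean] term_qubits_def term_angle_def split: prod.splits)
  also have "\<dots> = map ?g T"
    by (rule nth_equalityI) auto
  also have "prod_list (map ?g T) = cis (parity_phase T w)"
    unfolding parity_phase_def by (induction T) (auto simp: cis_mult)
  finally show ?thesis by (simp add: root_phase_def)
qed

end

definition terms_weight :: "parity_terms \<Rightarrow> nat" where
  "terms_weight T = sum_list (map (\<lambda>x. length (fst x) + 1) T)"

lemma sum_root_fanouts:
  "sum_list (map (\<lambda>f. length (snd f) + 1) (root_fanouts T anc)) = terms_weight T"
proof -
  have "map (\<lambda>i. length (map fst T ! i) + 1) [0..<length T] = map (\<lambda>x. length (fst x) + 1) T"
    by (rule nth_equalityI) auto
  then show ?thesis by (simp add: root_fanouts_def terms_weight_def term_qubits_def o_def)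
qed

lemma card_anc_index: "card (anc_index T) = terms_weight T"
proof -
  have "anc_index T = (SIGMA i:{..<length T}. {..length (term_qubits T i)})"
    by (auto simp: anc_index_def)
  then have "card (anc_index T) = (\<Sum>i<length T. length (term_qubits T i) + 1)"
    by (simp add: card_SigmaI)
  also have "\<dots> = sum_list (map (\<lambda>f. length (snd f) + 1) (root_fanouts T anc))"
    by (simp add: root_fanouts_def o_def interv_sum_list_conv_sum_set_nat atLeast0LessThan)
  finally show ?thesis using sum_root_fanouts[of T anc] by simp
qed

lemma length_anc_list: "length (anc_list T anc) = terms_weight T"
  using sum_root_fanouts[of T anc] by (simp add: anc_list_def length_concat o_def)

lemma (in parity_phase_gadget) csize_parity_phase_circuit:
  "csize (parity_phase_circuit T anc) \<le> 11 * terms_weight T"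
proof -
  let ?F = "copy_fanouts T anc"
  have "layer_size (fanouts ?F) \<le> sum_list (map (\<lambda>f. 2 * length (snd f)) ?F)"
    unfolding layer_size_fanouts
    by (rule sum_list_mono) (auto simp: copy_fanouts_def Suc_le_eq)
  also have "\<dots> = 2 * length (concat (map snd ?F))"
    by (simp add: length_concat sum_list_const_mult o_def)
  also have "length (concat (map snd ?F)) = card (anc_copies T anc)"
  proof -
    have "distinct (concat (map snd ?F))"
      unfolding copy_fanouts_def map_map o_def snd_conv
      by (rule distinct_concat_map) (auto simp: distinct_copies_of copies_of_disjoint)
    then show ?thesis using distinct_card targets_copy_fanouts by metis
  qed
  also have "card (anc_copies T anc) \<le> card (anc_index T)"
    using card_mono[OF finite_anc_qubits anc_copies_subset] card_image_le[OF finite_anc_index]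
    unfolding anc_qubits_def by (rule order_trans)
  finally have copy: "layer_size (fanouts ?F) \<le> 2 * terms_weight T"
    by (simp add: card_anc_index)
  have root: "layer_size (fanouts (root_fanouts T anc)) = terms_weight T"
    by (simp only: layer_size_fanouts sum_root_fanouts)
  have "layer_size (angle_layer T anc) = length T"
    by (simp add: layer_size_def angle_layer_def o_def sum_list_triv)
  also have "length T \<le> terms_weight T"
    unfolding terms_weight_def by (induction T) auto
  finally have angle: "layer_size (angle_layer T anc) \<le> terms_weight T" .
  show ?thesis
    using copy root angle
    by (simp add: parity_phase_circuit_def csize_Cons csize_Nil layer_size_hadamard_layer
        length_anc_list)
qed

definition neg_terms :: "parity_terms \<Rightarrow> parity_terms" where
  "neg_terms T = map (\<lambda>(S, a). (S, - a)) T"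

lemma map_fst_neg_terms: "map fst (neg_terms T) = map fst T"
  by (induction T) (auto simp: neg_terms_def)

lemma length_neg_terms: "length (neg_terms T) = length T"
  by (simp add: neg_terms_def)

lemma term_qubits_neg_terms: "term_qubits (neg_terms T) = term_qubits T"
  by (rule ext) (simp add: term_qubits_def map_fst_neg_terms)

lemma terms_weight_neg_terms: "terms_weight (neg_terms T) = terms_weight T"
  by (induction T) (auto simp: terms_weight_def neg_terms_def)

lemma root_parity_neg_terms: "root_parity (neg_terms T) anc = root_parity T anc"
proof -
  have "anc_index (neg_terms T) = anc_index T"
    by (simp add: anc_index_def term_qubits_neg_terms length_neg_terms)
  then have "anc_copies (neg_terms T) anc = anc_copies T anc"
    "copy_source (neg_terms T) anc = copy_source T anc" "copy_root (neg_terms T) anc = copy_root T anc"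
    by (simp_all add: anc_copies_def copy_source_def copy_root_def fun_eq_iff
        term_qubits_neg_terms length_neg_terms)
  then show ?thesis unfolding root_parity_def by simp
qed

lemma parity_phase_gadget_neg_terms:
  "parity_phase_gadget T anc \<Longrightarrow> parity_phase_gadget (neg_terms T) anc"
  by (simp add: parity_phase_gadget_def anc_index_def term_qubits_neg_terms length_neg_terms
      map_fst_neg_terms)

lemma term_angle_neg_terms: "i < length T \<Longrightarrow> term_angle (neg_terms T) i = - term_angle T i"
  by (auto simp: term_angle_def neg_terms_def split: prod.splits)

lemma prod_list_map_mult:
  fixes f g :: "'a \<Rightarrow> 'b::comm_monoid_mult"
  shows "prod_list (map f xs) * prod_list (map g xs) = prod_list (map (\<lambda>x. f x * g x) xs)"
  by (induction xs) (simp_all add: mult_ac)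

lemma (in parity_phase_gadget) run_neg_terms_inverse:
  "run (parity_phase_circuit (neg_terms T) anc) (run (parity_phase_circuit T anc) \<psi>) = \<psi>"
proof
  fix w
  let ?pos = "\<lambda>i. if root_parity T anc w i then cis (term_angle T i) else 1"
  let ?neg = "\<lambda>i. if root_parity T anc w i then cis (- term_angle T i) else 1"
  have "?neg i * ?pos i = 1" for i
    by (simp add: cis_mult)
  then have inverse: "prod_list (map ?neg [0..<length T]) * prod_list (map ?pos [0..<length T]) = 1"
    unfolding prod_list_map_mult by (simp add: map_replicate_const)
  have "root_phase (neg_terms T) anc w = prod_list (map ?neg [0..<length T])"
    unfolding root_phase_def
    by (rule arg_cong[where f=prod_list], rule map_cong)
      (auto simp: root_parity_neg_terms term_angle_neg_terms length_neg_terms)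
  then show "run (parity_phase_circuit (neg_terms T) anc) (run (parity_phase_circuit T anc) \<psi>) w = \<psi> w"
    using inverse
    unfolding parity_phase_gadget.run_parity_phase_circuit[OF
        parity_phase_gadget_neg_terms[OF parity_phase_gadget_axioms]] run_parity_phase_circuit
    by (simp add: root_phase_def mult.assoc[symmetric])
qed

section \<open>Counting and zero-testing phases\<close>

lemma exists_odd_decomp:
  fixes d :: int
  assumes "d \<noteq> 0"
  shows "\<exists>v r. d = 2 ^ v * r \<and> odd r"
  using assms
proof (induction "nat \<bar>d\<bar>" arbitrary: d rule: less_induct)
  case less
  show ?case
  proof (cases "odd d")
    case True then show ?thesis by (intro exI[of _ 0] exI[of _ d]) simp
  next
    case False
    then obtain d' where d': "d = 2 * d'" by blast
    then have "d' \<noteq> 0" "nat \<bar>d'\<bar> < nat \<bar>d\<bar>" using less.prems by auto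
    then obtain v r where "d' = 2 ^ v * r" "odd r" using less.hyps by blast
    then show ?thesis using d' by (intro exI[of _ "Suc v"] exI[of _ r]) simp
  qed
qed

lemma cis_odd_pi:
  fixes r :: int
  assumes "odd r"
  shows "cis (pi * of_int r) = -1"
proof -
  obtain q where q: "r = 2 * q + 1" using assms by (metis oddE)
  have e: "pi * real_of_int r = 2 * pi * real_of_int q + pi" by (simp add: q algebra_simps)
  have "cis (pi * of_int r) = cis (2 * pi * of_int q) * cis pi"
    by (simp only: e cis_mult)
  also have "\<dots> = -1" by simp
  finally show ?thesis .
qed

definition dyadic_angle :: "nat \<Rightarrow> nat \<Rightarrow> real" where
  "dyadic_angle m l = 2 * pi * 2 ^ l / 2 ^ m"

lemma exists_dyadic_half_turn:
  fixes d :: int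
  assumes "d \<noteq> 0" "\<bar>d\<bar> < 2 ^ m"
  shows "\<exists>l<m. cis (dyadic_angle m l * of_int d) = -1"
proof -
  obtain v r where vo: "d = 2 ^ v * r" "odd r" using exists_odd_decomp[OF assms(1)] by blast
  have "r \<noteq> 0" using vo by auto
  then have "(2::int) ^ v \<le> \<bar>d\<bar>" using vo by (simp add: abs_mult)
  then have "(2::int) ^ v < 2 ^ m" using assms(2) by linarith
  then have vm: "v < m" by (simp add: power_strict_increasing_iff)
  define l where "l = m - 1 - v"
  have lv: "l + v + 1 = m" using vm by (simp add: l_def)
  have "dyadic_angle m l * of_int d = pi * of_int r * (2 * 2 ^ l * 2 ^ v / 2 ^ m)"
    by (simp add: dyadic_angle_def vo algebra_simps)
  also have "(2::real) * 2 ^ l * 2 ^ v = 2 ^ m" by (simp flip: lv add: power_add algebra_simps)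
  finally have "dyadic_angle m l * of_int d = pi * of_int r" by simp
  then show ?thesis using cis_odd_pi[OF vo(2)] vm by (intro exI[of _ l]) (auto simp: l_def)
qed

text \<open>Qubits above the output \<open>n\<close> are numbered injectively by a tag and two indices: tag 0 for
  the counting registers, 1 for the flags, 2 and 3 for the ancillas of the two phase circuits.\<close>

definition register :: "nat \<Rightarrow> nat \<Rightarrow> nat \<Rightarrow> nat \<Rightarrow> nat" where
  "register n tag a b = n + 1 + prod_encode (tag, prod_encode (a, b))"

lemma register_eq_iff [simp]:
  "register n tag a b = register n tag' a' b' \<longleftrightarrow> tag = tag' \<and> a = a' \<and> b = b'"
  by (simp add: register_def)

lemma register_gt [simp]: "j \<le> n \<Longrightarrow> j < register n tag a b"
  by (simp add: register_def)

lemma register_not_le [simp]: "j \<le> n \<Longrightarrow> \<not> register n tag a b \<le> j" "j \<le> n \<Longrightarrow> \<not> register n tag a b < j"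
  by (simp_all add: register_def)

lemma register_neq [simp]: "j \<le> n \<Longrightarrow> register n tag a b \<noteq> j" "j \<le> n \<Longrightarrow> j \<noteq> register n tag a b"
  by (simp_all add: register_def)

definition count_qubit :: "nat \<Rightarrow> nat \<Rightarrow> nat \<Rightarrow> nat" where
  "count_qubit n k l = register n 0 k l"

definition flag_qubit :: "nat \<Rightarrow> nat \<Rightarrow> nat" where
  "flag_qubit n k = register n 1 k 0"

lemma flag_qubit_eq_iff [simp]: "flag_qubit n k = flag_qubit n k' \<longleftrightarrow> k = k'"
  by (simp add: flag_qubit_def)

definition hamming_weight :: "nat \<Rightarrow> basis \<Rightarrow> nat" where
  "hamming_weight n u = card {j. j < n \<and> u j}"

lemma hamming_weight_le: "hamming_weight n w \<le> n"
proof -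
  have "card {j. j < n \<and> w j} \<le> card {..<n}" by (rule card_mono) auto
  then show ?thesis by (simp add: hamming_weight_def)
qed

text \<open>Since \<open>x \<and> y = (x + y - (x \<oplus> y)) / 2\<close>, the phase \<open>\<theta> (|x| - k) y\<close> is a sum of parity terms.\<close>

definition count_terms_at :: "nat \<Rightarrow> nat \<Rightarrow> nat \<Rightarrow> nat \<Rightarrow> parity_terms" where
  "count_terms_at n m k l =
    concat (map (\<lambda>j. [([j], dyadic_angle m l / 2), ([count_qubit n k l], dyadic_angle m l / 2),
       ([j, count_qubit n k l], - (dyadic_angle m l / 2))]) [0..<n]) @
    [([count_qubit n k l], - (dyadic_angle m l * real k))]"

definition count_terms :: "nat \<Rightarrow> nat \<Rightarrow> nat list \<Rightarrow> parity_terms" where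
  "count_terms n m K = concat (map (\<lambda>k. concat (map (count_terms_at n m k) [0..<m])) K)"

definition count_register :: "nat \<Rightarrow> nat \<Rightarrow> nat \<Rightarrow> nat list" where
  "count_register n m k = map (count_qubit n k) [0..<m]"

text \<open>The Walsh expansion of \<open>e \<and> (y = 0)\<close> on the register \<open>y\<close> of length \<open>m\<close>:
  for every \<open>S \<subseteq> y\<close>, \<open>[e \<oplus> y\<^sub>S] - [y\<^sub>S]\<close> is \<open>e (-1)^|y\<^sub>S|\<close>, and these average to \<open>e [y = 0]\<close>.\<close>

definition zero_test_terms_at :: "nat \<Rightarrow> nat \<Rightarrow> nat \<Rightarrow> parity_terms" where
  "zero_test_terms_at n m k =
    concat (map (\<lambda>S. (flag_qubit n k # S, pi / 2 ^ m) # (if S = [] then [] else [(S, - (pi / 2 ^ m))]))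
      (subseqs (count_register n m k)))"

definition zero_test_terms :: "nat \<Rightarrow> nat \<Rightarrow> nat list \<Rightarrow> parity_terms" where
  "zero_test_terms n m K = concat (map (zero_test_terms_at n m) K)"

lemma parity_phase_append: "parity_phase (T1 @ T2) u = parity_phase T1 u + parity_phase T2 u"
  by (simp add: parity_phase_def)

lemma parity_phase_concat: "parity_phase (concat Ts) u = sum_list (map (\<lambda>T. parity_phase T u) Ts)"
  by (induction Ts) (simp_all add: parity_phase_def)

lemma card_pair:
  "j \<noteq> y \<Longrightarrow> card {q. (q = j \<or> q = y) \<and> u q} = (if u j then 1 else 0) + (if u y then 1 else 0)"
  by (cases "u j"; cases "u y") (simp_all add: Collect_disj_eq Collect_conj_eq)

lemma card_single: "card {q. q = y \<and> u q} = (if u y then 1 else 0)"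
proof -
  have "{q. q = y \<and> u q} = (if u y then {y} else {})" by auto
  then show ?thesis by simp
qed

lemma parity_phase_count_terms_at:
  shows "parity_phase (count_terms_at n m k l) u = (if u (count_qubit n k l) then dyadic_angle m l * (real (hamming_weight n u) - real k) else 0)"
proof -
  have j: "parity_phase [([j], dyadic_angle m l / 2), ([count_qubit n k l], dyadic_angle m l / 2), ([j, count_qubit n k l], - (dyadic_angle m l / 2))] u =
        (if u j \<and> u (count_qubit n k l) then dyadic_angle m l else 0)" if "j < n" for j
  proof -
    have "j \<noteq> count_qubit n k l" using that by (simp add: count_qubit_def)
    then show ?thesis unfolding parity_phase_def
      by (cases "u j"; cases "u (count_qubit n k l)") (simp_all add: card_pair card_single)
  qed
  let ?tr = "\<lambda>j. [([j], dyadic_angle m l / 2), ([count_qubit n k l], dyadic_angle m l / 2), ([j, count_qubit n k l], - (dyadic_angle m l / 2))]"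
  have "parity_phase (count_terms_at n m k l) u = sum_list (map (\<lambda>j. parity_phase (?tr j) u) [0..<n]) +
      parity_phase [([count_qubit n k l], - (dyadic_angle m l * real k))] u"
    unfolding count_terms_at_def parity_phase_append parity_phase_concat map_map o_def ..
  also have "sum_list (map (\<lambda>j. parity_phase (?tr j) u) [0..<n]) =
      sum_list (map (\<lambda>j. if u j \<and> u (count_qubit n k l) then dyadic_angle m l else 0) [0..<n])"
    by (rule arg_cong[where f=sum_list], rule map_cong) (auto simp: j)
  also have "parity_phase [([count_qubit n k l], - (dyadic_angle m l * real k))] u = (if u (count_qubit n k l) then - (dyadic_angle m l * real k) else 0)"
    by (simp add: parity_phase_def card_single)
  also have "sum_list (map (\<lambda>j. if u j \<and> u (count_qubit n k l) then dyadic_angle m l else 0) [0..<n]) =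
       (if u (count_qubit n k l) then dyadic_angle m l * real (hamming_weight n u) else 0)"
  proof -
    have "sum_list (map (\<lambda>j. if u j \<and> u (count_qubit n k l) then dyadic_angle m l else 0) [0..<n]) =
        (\<Sum>j\<in>{0..<n}. if u j \<and> u (count_qubit n k l) then dyadic_angle m l else 0)"
      by (simp add: interv_sum_list_conv_sum_set_nat)
    also have "\<dots> = (if u (count_qubit n k l) then dyadic_angle m l * real (hamming_weight n u) else 0)"
    proof (cases "u (count_qubit n k l)")
      case True
      have "(\<Sum>j\<in>{0..<n}. if u j then dyadic_angle m l else 0) = (\<Sum>j\<in>{j\<in>{0..<n}. u j}. dyadic_angle m l)"
        by (rule sum.inter_filter[symmetric]) simp
      also have "{j\<in>{0..<n}. u j} = {j. j < n \<and> u j}" by auto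
      finally have "(\<Sum>j\<in>{0..<n}. if u j then dyadic_angle m l else 0) = real (hamming_weight n u) * dyadic_angle m l"
        by (simp add: hamming_weight_def)
      then show ?thesis using True by (simp add: mult.commute)
    qed simp
    finally show ?thesis .
  qed
  finally show ?thesis by (simp add: algebra_simps)
qed

lemma set_subseqs_subset: "S \<in> set (subseqs xs) \<Longrightarrow> set S \<subseteq> set xs"
  using subseqs_powset[of xs] by blast

lemma sum_subseqs:
  assumes "distinct ys"
  shows "sum_list (map (\<lambda>S. h (set S)) (subseqs ys)) = sum h (Pow (set ys))"
proof -
  have "sum_list (map (\<lambda>S. h (set S)) (subseqs ys)) = sum_list (map h (map set (subseqs ys)))"
    by (simp add: o_def)
  also have "\<dots> = sum h (set (map set (subseqs ys)))"
    by (rule sum.distinct_set_conv_list[symmetric]) (rule distinct_set_subseqs[OF assms])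
  also have "set (map set (subseqs ys)) = Pow (set ys)" using subseqs_powset[of ys] by simp
  finally show ?thesis .
qed

lemma neg1_card_prod:
  assumes "finite B"
  shows "((-1::real) ^ card {q\<in>B. u q}) = (\<Prod>a\<in>B. if u a then -1 else 1)"
proof -
  have "(\<Prod>a\<in>B. if u a then (-1::real) else 1) = (\<Prod>a\<in>{q\<in>B. u q}. -1)"
    using assms by (rule prod.inter_filter[symmetric])
  then show ?thesis by simp
qed

lemma sum_neg1_pow:
  assumes "finite Y"
  shows "(\<Sum>B\<in>Pow Y. (-1::real) ^ card {q\<in>B. u q}) = (if \<forall>a\<in>Y. \<not> u a then 2 ^ card Y else 0)"
proof -
  have "(\<Sum>B\<in>Pow Y. (-1::real) ^ card {q\<in>B. u q}) = (\<Sum>B\<in>Pow Y. \<Prod>a\<in>B. if u a then -1 else 1)"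
    by (rule sum.cong) (auto intro!: neg1_card_prod finite_subset[OF _ assms])
  also have "\<dots> = (\<Prod>a\<in>Y. 1 + (if u a then -1 else 1))" by (rule sum_Pow_prod[OF assms])
  also have "\<dots> = (if \<forall>a\<in>Y. \<not> u a then 2 ^ card Y else 0)"
  proof (cases "\<forall>a\<in>Y. \<not> u a")
    case True then show ?thesis by simp
  next
    case False
    then obtain a where "a \<in> Y" "u a" by blast
    then show ?thesis using assms by (auto intro: prod_zero)
  qed
  finally show ?thesis .
qed

lemma distinct_count_register: "distinct (count_register n m k)"
  by (auto simp: count_register_def distinct_map inj_on_def count_qubit_def)

lemma card_count_register: "card (set (count_register n m k)) = m"
proof -
  have "card (set (count_register n m k)) = length (count_register n m k)" by (rule distinct_card[OF distinct_count_register])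
  then show ?thesis by (simp add: count_register_def)
qed

lemma flag_qubit_not_count_register: "flag_qubit n k \<notin> set (count_register n m k')"
  by (auto simp: count_register_def flag_qubit_def count_qubit_def)

lemma parity_phase_zero_test_terms_at:
  "parity_phase (zero_test_terms_at n m k) u = (if u (flag_qubit n k) \<and> (\<forall>l<m. \<not> u (count_qubit n k l)) then pi else 0)"
proof -
  let ?Y = "count_register n m k" and ?e = "flag_qubit n k"
  let ?g = "\<lambda>S. (?e # S, pi / 2 ^ m) # (if S = [] then [] else [(S, - (pi / 2 ^ m))])"
  have g: "parity_phase (?g S) u = (if u ?e then (pi / 2 ^ m) * (-1) ^ card {q\<in>set S. u q} else 0)"
    if S: "S \<in> set (subseqs ?Y)" for S
  proof -
    have eS: "?e \<notin> set S" using set_subseqs_subset[OF S] flag_qubit_not_count_register by blast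
    have c: "card {q \<in> set (?e # S). u q} = card {q\<in>set S. u q} + (if u ?e then 1 else 0)"
    proof (cases "u ?e")
      case True
      then have "{q \<in> set (?e # S). u q} = insert ?e {q\<in>set S. u q}" by auto
      then show ?thesis using eS True by simp
    next
      case False
      then have "{q \<in> set (?e # S). u q} = {q\<in>set S. u q}" by auto
      then show ?thesis using False by simp
    qed
    have "parity_phase (?g S) u = (if odd (card {q \<in> set (?e # S). u q}) then pi / 2 ^ m else 0) +
        (if odd (card {q\<in>set S. u q}) then - (pi / 2 ^ m) else 0)"
      by (cases "S = []") (simp_all add: parity_phase_def)
    then show ?thesis unfolding c by (cases "u ?e"; cases "even (card {q\<in>set S. u q})") simp_all
  qed
  have "parity_phase (zero_test_terms_at n m k) u = sum_list (map (\<lambda>S. parity_phase (?g S) u) (subseqs ?Y))"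
    unfolding zero_test_terms_at_def parity_phase_concat map_map o_def ..
  also have "\<dots> = sum_list (map (\<lambda>S. if u ?e then (pi / 2 ^ m) * (-1) ^ card {q\<in>set S. u q} else 0) (subseqs ?Y))"
    by (rule arg_cong[where f=sum_list], rule map_cong) (auto simp: g)
  also have "\<dots> = (\<Sum>B\<in>Pow (set ?Y). if u ?e then (pi / 2 ^ m) * (-1) ^ card {q\<in>B. u q} else 0)"
    by (rule sum_subseqs[OF distinct_count_register])
  also have "\<dots> = (if u ?e then (pi / 2 ^ m) * (\<Sum>B\<in>Pow (set ?Y). (-1) ^ card {q\<in>B. u q}) else 0)"
    by (simp add: sum_distrib_left)
  also have "\<dots> = (if u ?e \<and> (\<forall>a\<in>set ?Y. \<not> u a) then pi else 0)"
    by (simp add: sum_neg1_pow card_count_register)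
  also have "(\<forall>a\<in>set ?Y. \<not> u a) \<longleftrightarrow> (\<forall>l<m. \<not> u (count_qubit n k l))" by (auto simp: count_register_def)
  finally show ?thesis .
qed

lemma parity_phase_count_terms:
  shows "parity_phase (count_terms n m K) u = sum_list (map (\<lambda>k. sum_list (map (\<lambda>l.
     if u (count_qubit n k l) then dyadic_angle m l * (real (hamming_weight n u) - real k) else 0) [0..<m])) K)"
  unfolding count_terms_def parity_phase_concat map_map o_def parity_phase_count_terms_at ..

lemma parity_phase_zero_test_terms:
  "parity_phase (zero_test_terms n m K) u = sum_list (map (\<lambda>k. if u (flag_qubit n k) \<and> (\<forall>l<m. \<not> u (count_qubit n k l)) then pi else 0) K)"
  unfolding zero_test_terms_def parity_phase_concat map_map o_def parity_phase_zero_test_terms_at ..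

lemma cis_sum_list: "cis (sum_list (map f xs)) = prod_list (map (\<lambda>x. cis (f x)) xs)"
  by (induction xs) (auto simp: cis_mult[symmetric])

lemma parity_phase_gadget_register:
  assumes "\<forall>x\<in>set T. fst x \<noteq> [] \<and> distinct (fst x) \<and> (\<forall>q\<in>set (fst x). \<forall>a b. q \<noteq> register n tag a b)"
  shows "parity_phase_gadget T (register n tag)"
proof
  fix i assume "i < length T"
  then show "term_qubits T i \<noteq> [] \<and> distinct (term_qubits T i)"
    using assms by (auto simp: term_qubits_def)
next
  show "inj_on (\<lambda>(i, p). register n tag i p) (anc_index T)"
    by (auto simp: inj_on_def)
next
  fix i p
  show "register n tag i p \<notin> set (concat (map fst T))"
    using assms by auto
qed

lemma parity_phase_gadget_count_terms: "parity_phase_gadget (count_terms n m K) (register n 2)"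
  by (rule parity_phase_gadget_register)
    (auto simp: count_terms_def count_terms_at_def count_qubit_def)

lemma parity_phase_gadget_zero_test_terms: "parity_phase_gadget (zero_test_terms n m K) (register n 3)"
proof (rule parity_phase_gadget_register, intro ballI)
  fix x assume "x \<in> set (zero_test_terms n m K)"
  then obtain k S where S: "S \<in> set (subseqs (count_register n m k))"
    and x: "x = (flag_qubit n k # S, pi / 2 ^ m) \<or> (S \<noteq> [] \<and> x = (S, - (pi / 2 ^ m)))"
    by (auto simp: zero_test_terms_def zero_test_terms_at_def split: if_splits)
  have "distinct S" by (rule subseqs_distinctD[OF S distinct_count_register])
  moreover have "set S \<subseteq> range (register n 0 k)"
    using set_subseqs_subset[OF S] by (auto simp: count_register_def count_qubit_def)
  ultimately show "fst x \<noteq> [] \<and> distinct (fst x) \<and> (\<forall>q\<in>set (fst x). \<forall>a b. q \<noteq> register n 3 a b)"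
    using x by (auto simp: flag_qubit_def)
qed

section \<open>The threshold circuit\<close>

definition count_qubits :: "nat \<Rightarrow> nat \<Rightarrow> nat list \<Rightarrow> nat list" where
  "count_qubits n m K = concat (map (count_register n m) K)"

definition flag_qubits :: "nat \<Rightarrow> nat list \<Rightarrow> nat list" where
  "flag_qubits n K = map (flag_qubit n) K"

definition work_qubits :: "nat \<Rightarrow> nat \<Rightarrow> nat list \<Rightarrow> nat set" where
  "work_qubits n m K = set (count_qubits n m K) \<union> anc_qubits (count_terms n m K) (register n 2) \<union>
     anc_qubits (zero_test_terms n m K) (register n 3)"

lemma set_count_qubits: "a \<in> set (count_qubits n m K) \<longleftrightarrow> (\<exists>k\<in>set K. \<exists>l<m. a = count_qubit n k l)"
  unfolding count_qubits_def count_register_def by force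

lemma set_flag_qubits: "a \<in> set (flag_qubits n K) \<longleftrightarrow> (\<exists>k\<in>set K. a = flag_qubit n k)"
  by (auto simp: flag_qubits_def)

lemma distinct_count_qubits: "distinct K \<Longrightarrow> distinct (count_qubits n m K)"
  unfolding count_qubits_def
proof (rule distinct_concat_map)
  fix x y assume "x \<in> set K" "y \<in> set K" "x \<noteq> y"
  then show "set (count_register n m x) \<inter> set (count_register n m y) = {}"
    by (auto simp: count_register_def count_qubit_def)
qed (simp_all add: distinct_count_register)

lemma distinct_flag_qubits: "distinct K \<Longrightarrow> distinct (flag_qubits n K)"
  by (auto simp: flag_qubits_def distinct_map inj_on_def flag_qubit_def)

lemma anc_qubits_register: "j \<in> anc_qubits T (register n tag) \<Longrightarrow> \<exists>a b. j = register n tag a b"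
  by (auto simp: anc_qubits_def)

lemma work_qubits_gt: "j \<in> work_qubits n m K \<Longrightarrow> n < j"
  by (auto simp: work_qubits_def set_count_qubits count_qubit_def dest!: anc_qubits_register)

lemma flag_qubit_not_work: "j \<in> set (flag_qubits n K) \<Longrightarrow> j \<notin> work_qubits n m K'"
  by (auto simp: work_qubits_def set_flag_qubits set_count_qubits count_qubit_def flag_qubit_def
      dest!: anc_qubits_register)

lemma flag_qubit_neq [simp]: "flag_qubit n k \<noteq> n"
  by (simp add: flag_qubit_def)

lemma flag_qubit_gt: "j \<in> set (flag_qubits n K) \<Longrightarrow> n < j"
  by (auto simp: set_flag_qubits flag_qubit_def)

definition register_arg1 :: "nat \<Rightarrow> nat \<Rightarrow> nat" where
  "register_arg1 n q = fst (prod_decode (snd (prod_decode (q - n - 1))))"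

definition register_arg2 :: "nat \<Rightarrow> nat \<Rightarrow> nat" where
  "register_arg2 n q = snd (prod_decode (snd (prod_decode (q - n - 1))))"

lemma register_arg1 [simp]: "register_arg1 n (register n tag a b) = a"
  and register_arg2 [simp]: "register_arg2 n (register n tag a b) = b"
  by (simp_all add: register_arg1_def register_arg2_def register_def)

lemma register_arg1_flag_qubit [simp]: "register_arg1 n (flag_qubit n k) = k"
  by (simp add: flag_qubit_def)

definition count_phase :: "nat \<Rightarrow> nat \<Rightarrow> nat \<Rightarrow> nat \<Rightarrow> complex" where
  "count_phase n m c q = cis (dyadic_angle m (register_arg2 n q) * (real c - real (register_arg1 n q)))"

definition flip_on :: "nat set \<Rightarrow> basis \<Rightarrow> basis" where
  "flip_on F w = (\<lambda>j. if j \<in> F then \<not> w j else w j)"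

lemma flip_on_involution [simp]: "flip_on F (flip_on F w) = w"
  by (auto simp: flip_on_def fun_eq_iff)

lemma hamming_weight_flip_on: "\<forall>j\<in>F. n \<le> j \<Longrightarrow> hamming_weight n (flip_on F w) = hamming_weight n w"
proof -
  assume "\<forall>j\<in>F. n \<le> j"
  then have "{j. j < n \<and> flip_on F w j} = {j. j < n \<and> w j}" by (auto simp: flip_on_def)
  then show ?thesis by (simp add: hamming_weight_def)
qed

lemma prod_list_map_concat:
  "prod_list (map f (concat xss)) = prod_list (map (\<lambda>xs. prod_list (map f xs)) xss)"
  by (induction xss) auto

definition flag_circuit :: "nat \<Rightarrow> nat \<Rightarrow> nat list \<Rightarrow> circuit" where
  "flag_circuit n m K =
     [hadamard_layer (count_qubits n m K)] @ parity_phase_circuit (count_terms n m K) (register n 2) @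
     [hadamard_layer (count_qubits n m K), hadamard_layer (flag_qubits n K)] @
     parity_phase_circuit (zero_test_terms n m K) (register n 3) @
     [hadamard_layer (flag_qubits n K), hadamard_layer (count_qubits n m K)] @
     parity_phase_circuit (neg_terms (count_terms n m K)) (register n 2) @
     [hadamard_layer (count_qubits n m K)]"

definition parity_circuit :: "nat \<Rightarrow> nat list \<Rightarrow> circuit" where
  "parity_circuit n K =
     [hadamard_layer (n # flag_qubits n K), fanouts [(n, flag_qubits n K)],
      hadamard_layer (n # flag_qubits n K)]"

definition threshold_circuit :: "nat \<Rightarrow> nat \<Rightarrow> nat list \<Rightarrow> bool \<Rightarrow> circuit" where
  "threshold_circuit n m K negate =
     flag_circuit n m K @ parity_circuit n K @ flag_circuit n m K @
     (if negate then [[G1 n pauli_x]] else [])"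

locale threshold_layout =
  fixes n m :: nat and K :: "nat list"
  assumes distinct_K: "distinct K" and K_le_n: "\<And>k. k \<in> set K \<Longrightarrow> k \<le> n"
    and n_less_pow: "n < 2 ^ m"
begin

abbreviation count_set :: "nat set" where
  "count_set \<equiv> set (count_qubits n m K)"

abbreviation flag_set :: "nat set" where
  "flag_set \<equiv> set (flag_qubits n K)"

lemma cis_parity_phase_count_terms:
  assumes B: "B \<subseteq> count_set"
  shows "cis (parity_phase (count_terms n m K) (assign count_set B v)) =
    (\<Prod>a\<in>B. count_phase n m (hamming_weight n v) a)"
proof -
  let ?u = "assign count_set B v" and ?c = "hamming_weight n v"
  have "{j. j < n \<and> ?u j} = {j. j < n \<and> v j}"
    by (auto simp: assign_def set_count_qubits count_qubit_def)
  then have weight: "hamming_weight n ?u = ?c" by (simp add: hamming_weight_def)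
  have "cis (parity_phase (count_terms n m K) ?u) = prod_list (map (\<lambda>k. prod_list (map (\<lambda>l.
     if ?u (count_qubit n k l) then count_phase n m ?c (count_qubit n k l) else 1) [0..<m])) K)"
    by (simp add: parity_phase_count_terms weight cis_sum_list count_phase_def count_qubit_def o_def
        if_distrib[where f=cis] cong: if_cong)
  also have "\<dots> = prod_list (map (\<lambda>a. if ?u a then count_phase n m ?c a else 1) (count_qubits n m K))"
    unfolding count_qubits_def prod_list_map_concat count_register_def map_map o_def ..
  also have "\<dots> = (\<Prod>a\<in>count_set. if ?u a then count_phase n m ?c a else 1)"
    by (rule prod.distinct_set_conv_list[symmetric]) (rule distinct_count_qubits[OF distinct_K])
  also have "\<dots> = (\<Prod>a\<in>{a\<in>count_set. ?u a}. count_phase n m ?c a)"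
    by (rule prod.inter_filter[symmetric]) simp
  also have "{a\<in>count_set. ?u a} = B" using B by (auto simp: assign_def)
  finally show ?thesis .
qed

definition count_amplitude :: "nat \<Rightarrow> basis \<Rightarrow> complex" where
  "count_amplitude c v = inv_sqrt2 ^ card count_set * inv_sqrt2 ^ card count_set *
     (\<Prod>a\<in>count_set. 1 + (if v a then -1 else 1) * count_phase n m c a)"

definition counted_state :: "basis \<Rightarrow> nat \<Rightarrow> state" where
  "counted_state w c = (\<lambda>v. if assign count_set {} v = w then count_amplitude c v else 0)"

lemma count_stage:
  assumes clean: "\<forall>j\<in>work_qubits n m K. \<not> w j"
  shows "hadamard_on count_set (run (parity_phase_circuit (count_terms n m K) (register n 2))
      (hadamard_on count_set (ket w))) = counted_state w (hamming_weight n w)"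
proof
  fix v
  interpret gadget: parity_phase_gadget "count_terms n m K" "register n 2"
    by (rule parity_phase_gadget_count_terms)
  have "root_phase (count_terms n m K) (register n 2) (assign count_set B w) =
      (\<Prod>a\<in>B. count_phase n m (hamming_weight n w) a)" if "B \<subseteq> count_set" for B
  proof -
    have "\<forall>j\<in>anc_qubits (count_terms n m K) (register n 2). \<not> assign count_set B w j"
      using clean by (auto simp: assign_def work_qubits_def set_count_qubits count_qubit_def
          dest!: anc_qubits_register)
    then show ?thesis by (simp add: gadget.root_phase_clean cis_parity_phase_count_terms[OF that])
  qed
  from hadamard_diagonal_hadamard_ket[OF finite_set _ this]
  show "hadamard_on count_set (run (parity_phase_circuit (count_terms n m K) (register n 2))
      (hadamard_on count_set (ket w))) v = counted_state w (hamming_weight n w) v"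
    using clean by (simp add: gadget.run_parity_phase_circuit counted_state_def count_amplitude_def
        work_qubits_def)
qed

text \<open>A nonzero amplitude forces the register of \<open>k\<close> to be zero exactly when \<open>k = c\<close>: for
  \<open>0 < |c - k| < 2^m\<close> some dyadic angle turns the factor for that register qubit into \<open>0\<close>.\<close>

lemma count_amplitude_nonzero:
  assumes c: "c \<le> n" and nz: "count_amplitude c v \<noteq> 0" and k: "k \<in> set K"
  shows "(\<forall>l<m. \<not> v (count_qubit n k l)) \<longleftrightarrow> k = c"
proof -
  have all: "\<forall>a\<in>count_set. 1 + (if v a then -1 else 1) * count_phase n m c a \<noteq> 0"
    using nz by (simp add: count_amplitude_def prod_zero_iff)
  show ?thesis
  proof
    assume zero: "\<forall>l<m. \<not> v (count_qubit n k l)"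
    show "k = c"
    proof (rule ccontr)
      assume "k \<noteq> c"
      define d where "d = int c - int k"
      have "d \<noteq> 0" using \<open>k \<noteq> c\<close> by (simp add: d_def)
      moreover have "\<bar>d\<bar> < 2 ^ m"
      proof -
        have "\<bar>d\<bar> \<le> int n" using c K_le_n[OF k] by (auto simp: d_def)
        also have "int n < 2 ^ m" using n_less_pow by (metis of_nat_less_iff of_nat_numeral of_nat_power)
        finally show ?thesis .
      qed
      ultimately obtain l where l: "l < m" "cis (dyadic_angle m l * of_int d) = -1"
        using exists_dyadic_half_turn by blast
      have "count_phase n m c (count_qubit n k l) = -1"
        using l(2) by (simp add: count_phase_def count_qubit_def d_def)
      moreover have "count_qubit n k l \<in> count_set" using k l(1) by (auto simp: set_count_qubits)
      ultimately show False using all zero l(1) by force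
    qed
  next
    assume "k = c"
    show "\<forall>l<m. \<not> v (count_qubit n k l)"
    proof (intro allI impI)
      fix l assume "l < m"
      then have "count_qubit n k l \<in> count_set" using k by (auto simp: set_count_qubits)
      moreover have "count_phase n m c (count_qubit n k l) = 1"
        using \<open>k = c\<close> by (simp add: count_phase_def count_qubit_def)
      ultimately show "\<not> v (count_qubit n k l)" using all by force
    qed
  qed
qed

lemma cis_parity_phase_zero_test_terms:
  assumes B: "B \<subseteq> flag_set"
  shows "cis (parity_phase (zero_test_terms n m K) (assign flag_set B v)) =
    (\<Prod>a\<in>B. if \<forall>l<m. \<not> v (count_qubit n (register_arg1 n a) l) then -1 else 1)"
proof -
  let ?u = "assign flag_set B v"
  let ?f = "\<lambda>a. \<forall>l<m. \<not> v (count_qubit n (register_arg1 n a) l)"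
  have "cis (parity_phase (zero_test_terms n m K) ?u) =
      prod_list (map (\<lambda>k. if flag_qubit n k \<in> B \<and> ?f (flag_qubit n k) then -1 else 1) K)"
    unfolding parity_phase_zero_test_terms cis_sum_list
  proof (rule arg_cong[where f=prod_list], rule map_cong)
    fix k assume "k \<in> set K"
    then have "?u (flag_qubit n k) = (flag_qubit n k \<in> B)"
      by (auto simp: assign_def set_flag_qubits)
    moreover have "?u (count_qubit n k l) = v (count_qubit n k l)" for l
      by (auto simp: assign_def set_flag_qubits count_qubit_def flag_qubit_def)
    ultimately show "cis (if ?u (flag_qubit n k) \<and> (\<forall>l<m. \<not> ?u (count_qubit n k l)) then pi else 0) =
        (if flag_qubit n k \<in> B \<and> ?f (flag_qubit n k) then -1 else 1)"
      by (simp add: flag_qubit_def)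
  qed simp
  also have "\<dots> = prod_list (map (\<lambda>a. if a \<in> B \<and> ?f a then -1 else 1) (flag_qubits n K))"
    by (simp add: flag_qubits_def o_def)
  also have "\<dots> = (\<Prod>a\<in>flag_set. if a \<in> B \<and> ?f a then -1 else 1)"
    by (rule prod.distinct_set_conv_list[symmetric]) (rule distinct_flag_qubits[OF distinct_K])
  also have "\<dots> = (\<Prod>a\<in>{a\<in>flag_set. a \<in> B}. if ?f a then -1 else 1)"
    by (subst prod.inter_filter) (auto intro!: prod.cong)
  also have "{a\<in>flag_set. a \<in> B} = B" using B by auto
  finally show ?thesis .
qed

lemma counted_state_eq_0: "j \<notin> count_set \<Longrightarrow> v j \<noteq> w j \<Longrightarrow> counted_state w c v = 0"
  by (auto simp: counted_state_def assign_def fun_eq_iff)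

lemma counted_state_flip_flags:
  assumes c: "c \<le> n"
  defines "F \<equiv> {flag_qubit n c} \<inter> flag_set"
  shows "counted_state w c (\<lambda>j. if j \<in> flag_set \<and> (\<forall>l<m. \<not> v (count_qubit n (register_arg1 n j) l))
      then \<not> v j else v j) = counted_state (flip_on F w) c v"
    (is "counted_state w c ?v' = _")
proof -
  let ?f = "\<lambda>a. \<forall>l<m. \<not> v (count_qubit n (register_arg1 n a) l)"
  have "\<forall>a\<in>count_set. ?v' a = v a"
    using flag_qubit_not_work by (auto simp: work_qubits_def)
  then have amplitude: "count_amplitude c ?v' = count_amplitude c v"
    unfolding count_amplitude_def by (intro arg_cong2[where f="(*)"] refl prod.cong) auto
  show ?thesis
  proof (cases "count_amplitude c v = 0")
    case True
    then show ?thesis by (simp add: counted_state_def amplitude)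
  next
    case False
    have "j \<in> flag_set \<and> ?f j \<longleftrightarrow> j \<in> F" for j
    proof (cases "j \<in> flag_set")
      case True
      then obtain k where k: "k \<in> set K" "j = flag_qubit n k" by (auto simp: set_flag_qubits)
      then show ?thesis
        using count_amplitude_nonzero[OF c False k(1)] True by (auto simp: F_def)
    qed (simp add: F_def)
    then have flip: "?v' = flip_on F v"
      by (auto simp: flip_on_def fun_eq_iff)
    have "F \<inter> count_set = {}"
      using flag_qubit_not_work by (auto simp: F_def work_qubits_def)
    then have "assign count_set {} (flip_on F v) = flip_on F (assign count_set {} v)"
      by (auto simp: assign_def flip_on_def fun_eq_iff)
    then have "assign count_set {} ?v' = w \<longleftrightarrow> assign count_set {} v = flip_on F w"
      unfolding flip by (metis flip_on_involution)
    then show ?thesis by (simp add: counted_state_def amplitude)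
  qed
qed

lemma flag_stage:
  assumes clean: "\<forall>j\<in>work_qubits n m K. \<not> w j" and c: "c \<le> n"
  defines "F \<equiv> {flag_qubit n c} \<inter> flag_set"
  shows "hadamard_on flag_set (run (parity_phase_circuit (zero_test_terms n m K) (register n 3))
      (hadamard_on flag_set (counted_state w c))) = counted_state (flip_on F w) c"
proof
  fix v
  interpret gadget: parity_phase_gadget "zero_test_terms n m K" "register n 3"
    by (rule parity_phase_gadget_zero_test_terms)
  let ?A = "anc_qubits (zero_test_terms n m K) (register n 3)"
  show "hadamard_on flag_set (run (parity_phase_circuit (zero_test_terms n m K) (register n 3))
      (hadamard_on flag_set (counted_state w c))) v = counted_state (flip_on F w) c v"
  proof (cases "\<exists>j\<in>?A. v j")
    case True
    then obtain j where j: "j \<in> ?A" "v j" by blast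
    then have outside: "j \<notin> count_set" "j \<notin> flag_set" "\<not> w j"
      using clean by (auto simp: work_qubits_def set_count_qubits set_flag_qubits count_qubit_def
          flag_qubit_def dest!: anc_qubits_register)
    have "hadamard_on flag_set (run (parity_phase_circuit (zero_test_terms n m K) (register n 3))
        (hadamard_on flag_set (counted_state w c))) v = 0"
      using outside j(2)
      by (intro hadamard_on_zero)
        (simp add: gadget.run_parity_phase_circuit hadamard_on_zero counted_state_eq_0 assign_def)
    moreover have "counted_state (flip_on F w) c v = 0"
      by (rule counted_state_eq_0) (use outside j(2) in \<open>auto simp: flip_on_def F_def\<close>)
    ultimately show ?thesis by simp
  next
    case False
    let ?f = "\<lambda>a. \<forall>l<m. \<not> v (count_qubit n (register_arg1 n a) l)"
    have "root_phase (zero_test_terms n m K) (register n 3) (assign flag_set B v) =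
        (\<Prod>a\<in>B. if ?f a then -1 else 1)" if "B \<subseteq> flag_set" for B
    proof -
      have "\<forall>j\<in>?A. \<not> assign flag_set B v j"
        using False flag_qubit_not_work by (auto simp: assign_def work_qubits_def)
      then show ?thesis
        by (simp add: gadget.root_phase_clean cis_parity_phase_zero_test_terms[OF that])
    qed
    then have "hadamard_on flag_set (\<lambda>u. root_phase (zero_test_terms n m K) (register n 3) u *
        hadamard_on flag_set (counted_state w c) u) v =
      counted_state w c (\<lambda>j. if j \<in> flag_set \<and> ?f j then \<not> v j else v j)"
      by (rule hadamard_phase_hadamard[OF finite_set])
    then show ?thesis
      by (simp add: gadget.run_parity_phase_circuit counted_state_flip_flags[OF c] F_def)
  qed
qed


lemma run_flag_circuit:
  assumes clean: "\<forall>j\<in>work_qubits n m K. \<not> w j"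
  shows "run (flag_circuit n m K) (ket w) =
    ket (flip_on ({flag_qubit n (hamming_weight n w)} \<inter> flag_set) w)"
proof -
  let ?c = "hamming_weight n w"
  let ?F = "{flag_qubit n ?c} \<inter> flag_set"
  let ?count = "run (parity_phase_circuit (count_terms n m K) (register n 2))"
  let ?uncount = "run (parity_phase_circuit (neg_terms (count_terms n m K)) (register n 2))"
  let ?test = "run (parity_phase_circuit (zero_test_terms n m K) (register n 3))"
  interpret gadget: parity_phase_gadget "count_terms n m K" "register n 2"
    by (rule parity_phase_gadget_count_terms)
  have clean': "\<forall>j\<in>work_qubits n m K. \<not> flip_on ?F w j"
    using clean flag_qubit_not_work by (auto simp: flip_on_def)
  have "hamming_weight n (flip_on ?F w) = ?c"
    using flag_qubit_gt by (intro hamming_weight_flip_on) force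
  then have counted': "hadamard_on count_set (?count (hadamard_on count_set (ket (flip_on ?F w)))) =
      counted_state (flip_on ?F w) ?c"
    using count_stage[OF clean'] by simp
  have "run (flag_circuit n m K) (ket w) = hadamard_on count_set (?uncount (hadamard_on count_set
      (hadamard_on flag_set (?test (hadamard_on flag_set
        (hadamard_on count_set (?count (hadamard_on count_set (ket w)))))))))"
    using distinct_count_qubits[OF distinct_K] distinct_flag_qubits[OF distinct_K]
    by (simp add: flag_circuit_def run_append run_Cons run_Nil apply_hadamard_layer)
  also have "\<dots> = hadamard_on count_set (?uncount (hadamard_on count_set
      (counted_state (flip_on ?F w) ?c)))"
    by (simp only: count_stage[OF clean] flag_stage[OF clean hamming_weight_le])
  also have "\<dots> = ket (flip_on ?F w)"
    by (simp add: counted'[symmetric] hadamard_on_involution gadget.run_neg_terms_inverse)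
  finally show ?thesis .
qed

lemma run_parity_circuit:
  "run (parity_circuit n K) (ket v) = ket (parity_into flag_set (\<lambda>_. n) v)"
proof -
  have distinct: "distinct (flag_qubits n K)" by (rule distinct_flag_qubits[OF distinct_K])
  have n: "n \<notin> flag_set" using flag_qubit_gt by blast
  have "apply_layer (fanouts [(n, flag_qubits n K)]) \<phi> = (\<lambda>w. \<phi> (fanout_xor flag_set (\<lambda>_. n) w))"
    for \<phi>
    using apply_fanouts[of "[(n, flag_qubits n K)]" "\<lambda>_. n" \<phi>] distinct n by simp
  then have "run (parity_circuit n K) (ket v) =
      hadamard_on (insert n flag_set) (\<lambda>w. hadamard_on (insert n flag_set) (ket v)
        (fanout_xor flag_set (\<lambda>_. n) w))"
    using distinct n by (simp add: parity_circuit_def run_def apply_hadamard_layer)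
  also have "\<dots> = (\<lambda>w. ket v (parity_into flag_set (\<lambda>_. n) w))"
    by (rule hadamard_fanout_hadamard) (use n in auto)
  also have "\<dots> = ket (parity_into flag_set (\<lambda>_. n) v)"
    by (rule ket_comp_involution) (rule parity_into_involution, use n in auto)
  finally show ?thesis .
qed

text \<open>At most one flag is set, so their parity is whether the weight lies in \<open>K\<close>.\<close>

lemma parity_into_flags:
  fixes c :: nat
  assumes "\<forall>a\<in>flag_set. \<not> x a"
  defines "F \<equiv> {flag_qubit n c} \<inter> flag_set"
  shows "parity_into flag_set (\<lambda>_. n) (flip_on F x) = (flip_on F x)(n := x n \<noteq> (c \<in> set K))"
proof
  fix j
  have n: "n \<notin> F" using flag_qubit_gt by (auto simp: F_def)
  have flags: "{a \<in> flag_set. flip_on F x a} = F"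
    using assms by (auto simp: flip_on_def F_def)
  have "odd (card F) \<longleftrightarrow> c \<in> set K"
    by (cases "c \<in> set K") (auto simp: F_def set_flag_qubits)
  then show "parity_into flag_set (\<lambda>_. n) (flip_on F x) j = ((flip_on F x)(n := x n \<noteq> (c \<in> set K))) j"
    using n flags by (cases "j = n") (auto simp: parity_into_def flip_on_def)
qed

lemma run_threshold_circuit:
  assumes x: "\<forall>i>n. \<not> x i"
  shows "run (threshold_circuit n m K negate) (ket x) =
    ket (x(n := (x n \<noteq> (hamming_weight n x \<in> set K)) \<noteq> negate))"
proof -
  let ?c = "hamming_weight n x"
  let ?F = "{flag_qubit n ?c} \<inter> flag_set"
  let ?y = "x(n := x n \<noteq> (?c \<in> set K))"
  have F_gt: "\<forall>j\<in>?F. n < j" using flag_qubit_gt by blast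
  have clean: "\<forall>j\<in>work_qubits n m K. \<not> x j" using x work_qubits_gt by blast
  have flags: "\<forall>a\<in>flag_set. \<not> x a" using x flag_qubit_gt by blast
  have parity: "parity_into flag_set (\<lambda>_. n) (flip_on ?F x) = flip_on ?F ?y"
  proof -
    have "n \<notin> ?F" using F_gt by blast
    then show ?thesis
      unfolding parity_into_flags[OF flags] by (intro ext) (auto simp: flip_on_def)
  qed
  have clean': "\<forall>j\<in>work_qubits n m K. \<not> flip_on ?F ?y j"
  proof
    fix j assume j: "j \<in> work_qubits n m K"
    then have "j \<notin> ?F" using flag_qubit_not_work by blast
    moreover have "n < j" using j by (rule work_qubits_gt)
    ultimately show "\<not> flip_on ?F ?y j" using x by (simp add: flip_on_def)
  qed
  have "hamming_weight n (flip_on ?F ?y) = hamming_weight n ?y"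
    using F_gt by (intro hamming_weight_flip_on) auto
  also have "\<dots> = ?c"
    unfolding hamming_weight_def by (rule arg_cong[where f=card]) auto
  finally have weight: "hamming_weight n (flip_on ?F ?y) = ?c" .
  have "run (flag_circuit n m K @ parity_circuit n K @ flag_circuit n m K) (ket x) =
      run (flag_circuit n m K) (ket (flip_on ?F ?y))"
    unfolding run_append run_flag_circuit[OF clean] run_parity_circuit parity ..
  also have "\<dots> = ket ?y"
    unfolding run_flag_circuit[OF clean'] weight flip_on_involution ..
  finally show ?thesis
    by (cases negate) (simp_all add: threshold_circuit_def run_append run_pauli_x run_Nil)
qed

end

lemma wf_threshold_circuit:
  assumes "distinct K" "K \<noteq> []"
  shows "wf_circuit (threshold_circuit n m K negate)"
proof -
  have count: "distinct (count_qubits n m K)" and flags: "distinct (flag_qubits n K)"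
    using assms(1) by (simp_all add: distinct_count_qubits distinct_flag_qubits)
  have n: "n \<notin> set (flag_qubits n K)" using flag_qubit_gt by blast
  have "wf_circuit (flag_circuit n m K)"
    using parity_phase_gadget.wf_parity_phase_circuit[OF parity_phase_gadget_count_terms]
      parity_phase_gadget.wf_parity_phase_circuit[OF parity_phase_gadget_zero_test_terms]
      parity_phase_gadget.wf_parity_phase_circuit[OF
        parity_phase_gadget_neg_terms[OF parity_phase_gadget_count_terms]]
    by (simp add: flag_circuit_def wf_circuit_append wf_circuit_Cons wf_circuit_Nil
        wf_hadamard_layer count flags)
  moreover have "wf_layer (fanouts [(n, flag_qubits n K)])"
    by (rule wf_fanouts) (use assms(2) flags n in \<open>auto simp: flag_qubits_def\<close>)
  moreover have "wf_layer [G1 n pauli_x]"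
    by (rule wf_layerI) (auto simp: unitary2_pauli_x)
  ultimately show ?thesis
    using flags n
    by (simp add: threshold_circuit_def parity_circuit_def wf_circuit_append wf_circuit_Cons
        wf_circuit_Nil wf_hadamard_layer)
qed

lemma depth_threshold_circuit: "depth (threshold_circuit n m K negate) \<le> 70"
  by (simp add: depth_def threshold_circuit_def flag_circuit_def parity_circuit_def
      parity_phase_circuit_def)

lemma terms_weight_append: "terms_weight (T1 @ T2) = terms_weight T1 + terms_weight T2"
  by (simp add: terms_weight_def)

lemma terms_weight_concat: "terms_weight (concat Ts) = sum_list (map terms_weight Ts)"
  by (induction Ts) (simp_all add: terms_weight_def)

lemma terms_weight_count_terms: "terms_weight (count_terms n m K) = length K * (m * (7 * n + 2))"
proof -
  have "terms_weight (concat (map (\<lambda>j. [([j], dyadic_angle m l / 2),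
      ([count_qubit n k l], dyadic_angle m l / 2), ([j, count_qubit n k l], - (dyadic_angle m l / 2))])
      [0..<n])) = 7 * n" for k l
    by (simp only: terms_weight_concat map_map o_def) (simp add: terms_weight_def sum_list_triv)
  then have "terms_weight (count_terms_at n m k l) = 7 * n + 2" for k l
    by (simp add: count_terms_at_def terms_weight_append terms_weight_def)
  then show ?thesis
    by (simp add: count_terms_def terms_weight_concat o_def sum_list_triv)
qed

lemma terms_weight_zero_test_terms:
  "terms_weight (zero_test_terms n m K) \<le> length K * (2 ^ m * (2 * m + 3))"
proof -
  have "terms_weight (zero_test_terms_at n m k) \<le> 2 ^ m * (2 * m + 3)" for k
  proof -
    have "terms_weight (zero_test_terms_at n m k) =
        sum_list (map (\<lambda>S. length S + 2 + (if S = [] then 0 else length S + 1))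
          (subseqs (count_register n m k)))"
      unfolding zero_test_terms_at_def terms_weight_concat map_map o_def
      by (rule arg_cong[where f=sum_list], rule map_cong) (auto simp: terms_weight_def)
    also have "\<dots> \<le> sum_list (map (\<lambda>S. 2 * m + 3) (subseqs (count_register n m k)))"
    proof (rule sum_list_mono)
      fix S assume S: "S \<in> set (subseqs (count_register n m k))"
      have "length S = card (set S)"
        using subseqs_distinctD[OF S distinct_count_register] by (simp add: distinct_card)
      also have "\<dots> \<le> m"
        using card_mono[OF finite_set set_subseqs_subset[OF S]] by (simp add: card_count_register)
      finally show "length S + 2 + (if S = [] then 0 else length S + 1) \<le> 2 * m + 3" by auto
    qed
    also have "\<dots> = 2 ^ m * (2 * m + 3)"
      by (simp add: sum_list_triv length_subseqs count_register_def)
    finally show ?thesis .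
  qed
  then have "terms_weight (zero_test_terms n m K) \<le> sum_list (map (\<lambda>k. 2 ^ m * (2 * m + 3)) K)"
    unfolding zero_test_terms_def terms_weight_concat map_map o_def by (rule sum_list_mono)
  then show ?thesis by (simp add: sum_list_triv)
qed

lemma csize_flag_circuit:
  "csize (flag_circuit n m K) \<le>
    length K * (4 * m + 2 + 22 * (m * (7 * n + 2)) + 11 * (2 ^ m * (2 * m + 3)))"
proof -
  have "length (count_qubits n m K) = length K * m"
    by (simp add: count_qubits_def length_concat o_def count_register_def sum_list_triv)
  then have "csize (flag_circuit n m K) = length K * (4 * m + 2) +
      csize (parity_phase_circuit (count_terms n m K) (register n 2)) +
      csize (parity_phase_circuit (zero_test_terms n m K) (register n 3)) +
      csize (parity_phase_circuit (neg_terms (count_terms n m K)) (register n 2))"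
    by (simp add: flag_circuit_def csize_append csize_Cons csize_Nil layer_size_hadamard_layer
        flag_qubits_def algebra_simps)
  moreover have "csize (parity_phase_circuit (count_terms n m K) (register n 2)) \<le>
      11 * (length K * (m * (7 * n + 2)))"
    using parity_phase_gadget.csize_parity_phase_circuit[OF parity_phase_gadget_count_terms]
    by (simp add: terms_weight_count_terms)
  moreover have "csize (parity_phase_circuit (neg_terms (count_terms n m K)) (register n 2)) \<le>
      11 * (length K * (m * (7 * n + 2)))"
    using parity_phase_gadget.csize_parity_phase_circuit[OF
        parity_phase_gadget_neg_terms[OF parity_phase_gadget_count_terms]]
    by (simp add: terms_weight_neg_terms terms_weight_count_terms)
  moreover have "csize (parity_phase_circuit (zero_test_terms n m K) (register n 3)) \<le>
      11 * (length K * (2 ^ m * (2 * m + 3)))"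
    using parity_phase_gadget.csize_parity_phase_circuit[OF parity_phase_gadget_zero_test_terms[of n m K]]
      terms_weight_zero_test_terms[of n m K] by linarith
  ultimately show ?thesis by (simp add: algebra_simps)
qed

lemma csize_threshold_circuit:
  assumes "1 \<le> n" "1 \<le> m" "2 ^ m \<le> 2 * n" "K \<noteq> []"
  shows "csize (threshold_circuit n m K negate) \<le> 640 * (length K * n * m)"
proof -
  have "csize (parity_circuit n K) = 3 * length K + 3"
    by (simp add: parity_circuit_def csize_Cons csize_Nil layer_size_hadamard_layer
        layer_size_fanouts flag_qubits_def)
  moreover have "csize (if negate then [[G1 n pauli_x]] else []) \<le> 1"
    by (simp add: csize_Cons csize_Nil layer_size_def)
  ultimately have "csize (threshold_circuit n m K negate) \<le>
      length K * (2 * (4 * m + 2 + 22 * (m * (7 * n + 2)) + 11 * (2 ^ m * (2 * m + 3))) + 3) + 4"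
    using csize_flag_circuit[of n m K] by (simp add: threshold_circuit_def csize_append algebra_simps)
  also have "\<dots> \<le> length K * (635 * (n * m)) + 4"
  proof -
    have "2 ^ m * (2 * m + 3) \<le> (2 * n) * (5 * m)" using assms by (intro mult_le_mono) auto
    then have exp: "2 ^ m * (2 * m + 3) \<le> 10 * (n * m)" by simp
    have "2 * (4 * m + 2 + 22 * (m * (7 * n + 2)) + 11 * (2 ^ m * (2 * m + 3))) + 3 =
        96 * m + 7 + 308 * (n * m) + 22 * (2 ^ m * (2 * m + 3))"
      by (simp add: algebra_simps)
    moreover have "m \<le> n * m" "1 \<le> n * m" using assms by simp_all
    ultimately have "2 * (4 * m + 2 + 22 * (m * (7 * n + 2)) + 11 * (2 ^ m * (2 * m + 3))) + 3 \<le>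
        635 * (n * m)"
      using exp by linarith
    then show ?thesis by simp
  qed
  also have "\<dots> \<le> 640 * (length K * n * m)"
  proof -
    have "1 \<le> length K * (n * m)" using assms by (simp add: Suc_le_eq)
    moreover have "length K * (635 * (n * m)) = 635 * (length K * (n * m))"
      "640 * (length K * n * m) = 640 * (length K * (n * m))"
      by (simp_all add: algebra_simps)
    ultimately show ?thesis by linarith
  qed
  finally show ?thesis .
qed

definition num_bits :: "nat \<Rightarrow> nat" where
  "num_bits n = (LEAST m. n < 2 ^ m)"

lemma num_bits:
  assumes "1 \<le> n"
  shows "1 \<le> num_bits n" "n < 2 ^ num_bits n" "2 ^ num_bits n \<le> 2 * n"
    "real (num_bits n) \<le> 1 + log 2 (real n)"
proof -
  show less: "n < 2 ^ num_bits n"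
    unfolding num_bits_def by (rule LeastI[of _ n]) (rule less_exp)
  then show pos: "1 \<le> num_bits n"
    using assms by (cases "num_bits n") auto
  have "\<not> n < 2 ^ (num_bits n - 1)"
    unfolding num_bits_def by (rule not_less_Least) (use pos in \<open>simp add: num_bits_def\<close>)
  then have le: "2 ^ (num_bits n - 1) \<le> n" by simp
  have "(2::nat) ^ num_bits n = 2 * 2 ^ (num_bits n - 1)"
    using pos by (metis Suc_diff_1 One_nat_def Suc_le_eq power_Suc)
  then show "2 ^ num_bits n \<le> 2 * n" using le by simp
  have "real (num_bits n - 1) \<le> log 2 (real n)" by (rule le_log2_of_power[OF le])
  then show "real (num_bits n) \<le> 1 + log 2 (real n)" using pos by (simp add: of_nat_diff)
qed

lemma threshold_circuit_implements_TH:
  assumes n: "1 \<le> n" and K: "distinct K" "K \<noteq> []" "\<And>k. k \<in> set K \<Longrightarrow> k \<le> n"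
    and TH: "\<And>x. TH n t x \<longleftrightarrow> (hamming_weight n x \<in> set K) \<noteq> negate"
  defines "C \<equiv> threshold_circuit n (num_bits n) K negate"
  shows "implements_TH n t C \<and> real (depth C) \<le> 640 \<and>
    real (csize C) \<le> 640 * real (length K) * real n * (1 + log 2 (real n))"
proof (intro conjI)
  interpret threshold_layout n "num_bits n" K
    using K num_bits(2)[OF n] by unfold_locales auto
  show "implements_TH n t C"
    unfolding implements_TH_def C_def
  proof (intro conjI allI impI)
    show "wf_circuit (threshold_circuit n (num_bits n) K negate)"
      by (rule wf_threshold_circuit[OF K(1,2)])
    fix x :: basis assume "\<forall>i>n. \<not> x i"
    moreover have "((x n \<noteq> (hamming_weight n x \<in> set K)) \<noteq> negate) = (x n \<noteq> TH n t x)"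
      using TH[of x] by auto
    ultimately show "run (threshold_circuit n (num_bits n) K negate) (ket x) =
        ket (x(n := x n \<noteq> TH n t x))"
      by (simp only: run_threshold_circuit)
  qed
  show "real (depth C) \<le> 640"
    using depth_threshold_circuit[of n "num_bits n" K negate] by (simp add: C_def)
  have "real (csize C) \<le> 640 * (real (length K) * real n * real (num_bits n))"
    using csize_threshold_circuit[OF n num_bits(1,3)[OF n] K(2), of negate]
    unfolding C_def by (metis of_nat_le_iff of_nat_mult of_nat_numeral)
  also have "\<dots> \<le> 640 * (real (length K) * real n * (1 + log 2 (real n)))"
    using num_bits(4)[OF n] by (intro mult_left_mono) auto
  finally show "real (csize C) \<le> 640 * real (length K) * real n * (1 + log 2 (real n))"
    by (simp add: mult.assoc)
qed

theorem lemma3: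
  shows "\<exists>c::real.
    (\<forall>n t. 1 \<le> t \<and> t \<le> (n + 1) div 2 \<longrightarrow>
       (\<exists>C. implements_TH n t C \<and> real (depth C) \<le> c \<and>
            real (csize C) \<le> c * real t * real n * (1 + log 2 (real n)))) \<and>
    (\<forall>n t. 1 \<le> t \<and> (n + 1) div 2 \<le> t \<and> t \<le> n \<longrightarrow>
       (\<exists>C. implements_TH n t C \<and> real (depth C) \<le> c \<and>
            real (csize C) \<le> c * real (n - t + 1) * real n * (1 + log 2 (real n))))"
proof (intro exI[of _ 640] conjI allI impI)
  fix n t :: nat
  assume t: "1 \<le> t \<and> t \<le> (n + 1) div 2"
  have "TH n t x \<longleftrightarrow> (hamming_weight n x \<in> set [0..<t]) \<noteq> True" for x
    by (auto simp: TH_def hamming_weight_def)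
  moreover have "1 \<le> n" "[0..<t] \<noteq> []" "\<And>k. k \<in> set [0..<t] \<Longrightarrow> k \<le> n" using t by auto
  ultimately show "\<exists>C. implements_TH n t C \<and> real (depth C) \<le> 640 \<and>
      real (csize C) \<le> 640 * real t * real n * (1 + log 2 (real n))"
    using threshold_circuit_implements_TH[OF _ distinct_upt] by (metis length_upt minus_nat.diff_0)
next
  fix n t :: nat
  assume t: "1 \<le> t \<and> (n + 1) div 2 \<le> t \<and> t \<le> n"
  have "TH n t x \<longleftrightarrow> (hamming_weight n x \<in> set [t..<n + 1]) \<noteq> False" for x
    using hamming_weight_le[of n x] by (auto simp: TH_def hamming_weight_def)
  moreover have "1 \<le> n" "[t..<n + 1] \<noteq> []" "\<And>k. k \<in> set [t..<n + 1] \<Longrightarrow> k \<le> n"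
    "length [t..<n + 1] = n - t + 1"
    using t by auto
  ultimately show "\<exists>C. implements_TH n t C \<and> real (depth C) \<le> 640 \<and>
      real (csize C) \<le> 640 * real (n - t + 1) * real n * (1 + log 2 (real n))"
    using threshold_circuit_implements_TH[OF _ distinct_upt] by metis
qed

end
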